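(* Let $B$ be the open unit disk. Let $\Phi:\partial B\to\gamma$ be an orientation preserving $C^1$ diffeomorphism onto a simple closed curve $\gamma$, $D$ the bounded domain with $\partial D=\gamma$, and $U\in C^2(B;\mathbb R^2)\cap C(\overline B;\mathbb R^2)$ the solution of $\Delta U=0$ in $B$, $U=\Phi$ on $\partial B$, and assume $U\in C^1(\overline B;\mathbb R^2)$. Then $\det DU>0$ everywhere on $\Phi^{-1}(\gamma_c)$.
   Context: With $\mathrm{co}(D)$ the convex hull of $D$, the convex part of $\partial D$ is the closed set $\gamma_c=\partial D\cap\partial(\mathrm{co}(D))$. *)

theory Defs
  imports "HOL-Complex_Analysis.Complex_Analysis"
begin

text \<open>We identify R^2 with \<complex> (x + i y). Real-linear maps complex \<Rightarrow> complex play the role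
of 2x2 real matrices.\<close>

definition jac_det :: "(complex \<Rightarrow> complex) \<Rightarrow> real" where
  "jac_det L = Re (L 1) * Im (L \<i>) - Im (L 1) * Re (L \<i>)"

definition harmonic_on :: "(complex \<Rightarrow> real) \<Rightarrow> complex set \<Rightarrow> bool" where
  "harmonic_on u S \<longleftrightarrow>
     (\<exists>u' u''. (\<forall>z\<in>S. (u has_derivative u' z) (at z)) \<and>
        (\<forall>z\<in>S. \<forall>v. ((\<lambda>w. u' w v) has_derivative u'' z v) (at z)) \<and>
        (\<forall>v w. continuous_on S (\<lambda>z. u'' z v w)) \<and>
        (\<forall>z\<in>S. u'' z 1 1 + u'' z \<i> \<i> = 0))"

definition convex_part :: "complex set \<Rightarrow> complex set" where
  "convex_part D = frontier D \<inter> frontier (convex hull D)"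

end

theory Submission
  imports Defs
begin

text \<open>
  Fix \<open>z\<^sub>0\<close> on the unit circle with \<open>p = \<Phi> z\<^sub>0\<close> in the convex part of \<open>\<partial>D\<close>, and let
  \<open>\<nu>\<close> be the outer normal of a supporting line of \<open>co(D)\<close> at \<open>p\<close>. The function
  \<open>(U - p) \<bullet> \<nu>\<close> is harmonic, non-positive on the circle and not identically zero there
  (the boundary of a bounded domain does not lie on a line), so by the Hopf lemma the radial derivative
  satisfies \<open>DU z\<^sub>0 z\<^sub>0 \<bullet> \<nu> > 0\<close>. The tangential derivative \<open>DU z\<^sub>0 (i z\<^sub>0) = \<Phi>'\<close> is
  orthogonal to \<open>\<nu>\<close>, say \<open>\<Phi>' = k i \<nu>\<close>, and the Jacobian is \<open>k (DU z\<^sub>0 z\<^sub>0 \<bullet> \<nu>)\<close>.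
  Finally \<open>k > 0\<close> by orientation: if \<open>k < 0\<close>, straightening the curve near \<open>p\<close> along its
  tangent shows that the points \<open>p - s \<nu>\<close> for small \<open>s > 0\<close> have negative winding number,
  whereas a Jordan curve winding once around \<open>D\<close> has winding numbers \<open>0\<close> or \<open>1\<close> only.
\<close>

section \<open>Maximum principles and the Hopf lemma\<close>

definition laplacian_nonneg_on :: "(complex \<Rightarrow> real) \<Rightarrow> complex set \<Rightarrow> bool" where
  "laplacian_nonneg_on h S \<longleftrightarrow>
     (\<exists>h' h''. (\<forall>z\<in>S. (h has_derivative h' z) (at z)) \<and>
        (\<forall>z\<in>S. \<forall>e. ((\<lambda>w. h' w e) has_derivative h'' z e) (at z)) \<and>
        (\<forall>z\<in>S. h'' z 1 1 + h'' z \<i> \<i> \<ge> 0))"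

definition laplacian_pos_on :: "(complex \<Rightarrow> real) \<Rightarrow> complex set \<Rightarrow> bool" where
  "laplacian_pos_on h S \<longleftrightarrow>
     (\<exists>h' h''. (\<forall>z\<in>S. (h has_derivative h' z) (at z)) \<and>
        (\<forall>z\<in>S. \<forall>e. ((\<lambda>w. h' w e) has_derivative h'' z e) (at z)) \<and>
        (\<forall>z\<in>S. h'' z 1 1 + h'' z \<i> \<i> > 0))"

lemma harmonic_on_imp_laplacian_nonneg_on:
  "harmonic_on h S \<Longrightarrow> laplacian_nonneg_on h S"
  unfolding harmonic_on_def laplacian_nonneg_on_def by (metis order_refl)

lemma laplacian_nonneg_on_subset:
  "laplacian_nonneg_on h S \<Longrightarrow> T \<subseteq> S \<Longrightarrow> laplacian_nonneg_on h T"
  unfolding laplacian_nonneg_on_def by blast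

lemma laplacian_pos_on_subset:
  "laplacian_pos_on h S \<Longrightarrow> T \<subseteq> S \<Longrightarrow> laplacian_pos_on h T"
  unfolding laplacian_pos_on_def by blast

lemma laplacian_pos_on_add:
  assumes "laplacian_nonneg_on h S" "laplacian_pos_on b S"
  shows "laplacian_pos_on (\<lambda>z. h z + b z) S"
proof -
  obtain h' h'' where h: "\<forall>z\<in>S. (h has_derivative h' z) (at z)"
      "\<forall>z\<in>S. \<forall>e. ((\<lambda>w. h' w e) has_derivative h'' z e) (at z)"
      "\<forall>z\<in>S. h'' z 1 1 + h'' z \<i> \<i> \<ge> 0"
    using assms(1) unfolding laplacian_nonneg_on_def by blast
  obtain b' b'' where b: "\<forall>z\<in>S. (b has_derivative b' z) (at z)"
      "\<forall>z\<in>S. \<forall>e. ((\<lambda>w. b' w e) has_derivative b'' z e) (at z)"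
      "\<forall>z\<in>S. b'' z 1 1 + b'' z \<i> \<i> > 0"
    using assms(2) unfolding laplacian_pos_on_def by blast
  show ?thesis
    unfolding laplacian_pos_on_def
    by (rule exI[of _ "\<lambda>z e. h' z e + b' z e"], rule exI[of _ "\<lambda>z e f. h'' z e f + b'' z e f"])
       (use h b in \<open>fastforce intro: has_derivative_add\<close>)
qed

lemma laplacian_pos_on_norm_sq:
  assumes "\<eta> > 0"
  shows "laplacian_pos_on (\<lambda>y. \<eta> * ((y - c) \<bullet> (y - c)) + a) S"
  unfolding laplacian_pos_on_def
  by (rule exI[of _ "\<lambda>y e. \<eta> * (2 * ((y - c) \<bullet> e))"], rule exI[of _ "\<lambda>y e f. \<eta> * (2 * (f \<bullet> e))"])
     (use assms in \<open>auto intro!: derivative_eq_intros simp: inner_commute\<close>)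

lemma has_real_derivative_along_line:
  fixes v :: "'a::real_normed_vector \<Rightarrow> real"
  assumes "(v has_derivative D) (at (z + t *\<^sub>R e) within T)" "(\<lambda>s. z + s *\<^sub>R e) ` S \<subseteq> T"
  shows "((\<lambda>s. v (z + s *\<^sub>R e)) has_real_derivative D e) (at t within S)"
proof -
  have "((\<lambda>s. z + s *\<^sub>R e) has_derivative (\<lambda>s. s *\<^sub>R e)) (at t within S)"
    by (auto intro!: derivative_eq_intros)
  from has_derivative_in_compose[OF this has_derivative_subset[OF assms]]
  have "((\<lambda>s. v (z + s *\<^sub>R e)) has_derivative (\<lambda>s. D (s *\<^sub>R e))) (at t within S)" .
  moreover have "(\<lambda>s. D (s *\<^sub>R e)) = (*) (D e)"
    using linear_scale[OF has_derivative_linear[OF assms(1)]] by (auto simp: fun_eq_iff)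
  ultimately show ?thesis by (simp add: has_field_derivative_def)
qed

lemma second_derivative_nonpos_at_local_max:
  fixes v :: "'a::real_normed_vector \<Rightarrow> real"
  assumes r: "r > 0"
   and d1: "\<And>w. w \<in> ball z r \<Longrightarrow> (v has_derivative v' w) (at w)"
   and d2: "((\<lambda>w. v' w e) has_derivative D2) (at z)"
   and mx: "\<And>w. w \<in> ball z r \<Longrightarrow> v w \<le> v z"
  shows "D2 e \<le> 0"
proof (rule ccontr)
  assume neg: "\<not> D2 e \<le> 0"
  have "v' z = (\<lambda>h. 0)"
  proof (rule has_derivative_local_max)
    show "(v has_derivative v' z) (at z)" using d1 r by simp
    show "\<forall>\<^sub>F y in at z. v y \<le> v z"
      by (rule eventually_mono[OF eventually_at_ball[OF r, of z UNIV]]) (use mx in auto)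
  qed
  define k where "k = (\<lambda>t::real. v' (z + t *\<^sub>R e) e)"
  have "(k has_real_derivative D2 e) (at 0)"
    unfolding k_def by (rule has_real_derivative_along_line) (use d2 in auto)
  then obtain d where d: "d > 0" "\<And>h. h > 0 \<Longrightarrow> h < d \<Longrightarrow> k 0 < k h"
    using DERIV_pos_inc_right neg by force
  have "k 0 = 0" using \<open>v' z = (\<lambda>h. 0)\<close> by (simp add: k_def)
  define t1 where "t1 = min (d/2) (r / (2 * norm e + 1))"
  have t1: "t1 > 0" "t1 < d" "t1 * norm e < r"
  proof -
    have "r / (2 * norm e + 1) > 0" using r by (simp add: add_nonneg_pos)
    then show "t1 > 0" "t1 < d" using d by (auto simp: t1_def)
    have "t1 * norm e \<le> r / (2 * norm e + 1) * norm e"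
      by (rule mult_right_mono) (auto simp: t1_def)
    also have "\<dots> = r * (norm e / (2 * norm e + 1))" by simp
    also have "\<dots> < r" using r by (simp add: divide_less_eq add_nonneg_pos)
    finally show "t1 * norm e < r" .
  qed
  have inb: "z + t *\<^sub>R e \<in> ball z r" if "0 \<le> t" "t \<le> t1" for t
  proof -
    have "t * norm e \<le> t1 * norm e" using that by (simp add: mult_right_mono)
    then show ?thesis using t1 that by (simp add: dist_norm)
  qed
  define g where "g = (\<lambda>t::real. v (z + t *\<^sub>R e))"
  have "DERIV g t :> k t" if "0 \<le> t" "t \<le> t1" for t
    unfolding g_def k_def by (rule has_real_derivative_along_line) (use d1[OF inb[OF that]] in auto)
  then obtain \<xi> where xi: "0 < \<xi>" "\<xi> < t1" "g t1 - g 0 = t1 * k \<xi>"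
    using MVT2[of 0 t1 g k] t1 by auto
  have "k \<xi> > 0" using d(2)[of \<xi>] xi t1 \<open>k 0 = 0\<close> by simp
  then have "t1 * k \<xi> > 0" using t1(1) by simp
  then have "g t1 > g 0" using xi(3) by linarith
  moreover have "g t1 \<le> g 0" using mx[OF inb[of t1]] t1 by (simp add: g_def)
  ultimately show False by simp
qed

lemma maximum_principle_laplacian_pos:
  fixes v :: "complex \<Rightarrow> real"
  assumes "compact K" "open S" "S \<subseteq> K" "continuous_on K v" "laplacian_pos_on v S"
   and bd: "\<And>z. z \<in> K \<Longrightarrow> z \<notin> S \<Longrightarrow> v z \<le> 0"
   and z: "z \<in> K"
  shows "v z \<le> 0"
proof -
  obtain v' v'' where d1: "\<And>z. z \<in> S \<Longrightarrow> (v has_derivative v' z) (at z)"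
      and d2: "\<And>z e. z \<in> S \<Longrightarrow> ((\<lambda>w. v' w e) has_derivative v'' z e) (at z)"
      and lap: "\<And>z. z \<in> S \<Longrightarrow> v'' z 1 1 + v'' z \<i> \<i> > 0"
    using assms(5) unfolding laplacian_pos_on_def by blast
  obtain m where m: "m \<in> K" "\<And>y. y \<in> K \<Longrightarrow> v y \<le> v m"
    using continuous_attains_sup[OF assms(1) _ assms(4)] z by blast
  have "m \<notin> S"
  proof
    assume "m \<in> S"
    obtain r where r: "r > 0" "ball m r \<subseteq> S" using assms(2) \<open>m \<in> S\<close> open_contains_ball by blast
    have "v'' m e e \<le> 0" for e
      by (rule second_derivative_nonpos_at_local_max[OF r(1), of m v v' e "v'' m e"])
         (use r d1 d2 m assms(3) \<open>m \<in> S\<close> in blast)+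
    with lap[OF \<open>m \<in> S\<close>] show False by (metis add_nonpos_nonpos not_le)
  qed
  then show ?thesis using bd m z by fastforce
qed

lemma weak_maximum_principle:
  fixes h :: "complex \<Rightarrow> real"
  assumes R: "R > 0" and hc: "continuous_on (cball c R) h"
   and lap: "laplacian_nonneg_on h (ball c R)"
   and bd: "\<And>z. z \<in> sphere c R \<Longrightarrow> h z \<le> 0"
   and z: "z \<in> cball c R"
  shows "h z \<le> 0"
proof (rule ccontr)
  assume "\<not> h z \<le> 0"
  then have hz: "h z > 0" by simp
  define \<eta> where "\<eta> = h z / (2 * R\<^sup>2)"
  have eta: "\<eta> > 0" using hz R by (simp add: \<eta>_def)
  define b where "b = (\<lambda>y. \<eta> * ((y - c) \<bullet> (y - c)) + - (\<eta> * R\<^sup>2))"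
  have "h z + b z \<le> 0"
  proof (rule maximum_principle_laplacian_pos[of "cball c R" "ball c R"])
    show "continuous_on (cball c R) (\<lambda>y. h y + b y)"
      unfolding b_def by (intro continuous_intros hc)
    show "laplacian_pos_on (\<lambda>y. h y + b y) (ball c R)"
      unfolding b_def by (intro laplacian_pos_on_add lap laplacian_pos_on_norm_sq eta)
    show "h y + b y \<le> 0" if "y \<in> cball c R" "y \<notin> ball c R" for y
    proof -
      have "(y - c) \<bullet> (y - c) = R\<^sup>2"
        using that by (simp add: power2_norm_eq_inner[symmetric] dist_norm norm_minus_commute)
      then show ?thesis using bd[of y] that by (simp add: b_def)
    qed
  qed (use z in auto)
  moreover have "\<eta> * ((z - c) \<bullet> (z - c)) \<ge> 0" using eta by simp
  ultimately have "h z \<le> \<eta> * R\<^sup>2" by (simp add: b_def)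
  also have "\<dots> = h z / 2" using R by (simp add: \<eta>_def)
  finally show False using hz by simp
qed

text \<open>With \<open>q = R\<^sup>2 - |y - c|\<^sup>2\<close> the barrier \<open>q + q\<^sup>2/R\<^sup>2\<close> has Laplacian
  \<open>16 |y - c|\<^sup>2/R\<^sup>2 - 12\<close>.\<close>

lemma laplacian_pos_on_hopf_barrier:
  assumes "\<epsilon> > 0" "R > 0"
  shows "laplacian_pos_on
     (\<lambda>y. \<epsilon> * ((R\<^sup>2 - (y - c) \<bullet> (y - c)) + (R\<^sup>2 - (y - c) \<bullet> (y - c))\<^sup>2 / R\<^sup>2))
     {y. 3 * R\<^sup>2 < 4 * ((y - c) \<bullet> (y - c))}"
  unfolding laplacian_pos_on_def
proof (intro exI conjI ballI allI)
  fix y :: complex and e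
  let ?q = "\<lambda>y. R\<^sup>2 - (y - c) \<bullet> (y - c)"
  show "((\<lambda>y. \<epsilon> * (?q y + (?q y)\<^sup>2 / R\<^sup>2)) has_derivative
          (\<lambda>e. \<epsilon> * ((1 + 2 * ?q y / R\<^sup>2) * (-2 * ((y - c) \<bullet> e))))) (at y)"
    using assms by (auto intro!: derivative_eq_intros simp: fun_eq_iff inner_commute field_simps power2_eq_square)
  show "((\<lambda>w. \<epsilon> * ((1 + 2 * ?q w / R\<^sup>2) * (-2 * ((w - c) \<bullet> e)))) has_derivative
          (\<lambda>f. \<epsilon> * ((2 * (-2 * ((y - c) \<bullet> f)) / R\<^sup>2) * (-2 * ((y - c) \<bullet> e))
                    + (1 + 2 * ?q y / R\<^sup>2) * (-2 * (f \<bullet> e))))) (at y)"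
    using assms by (auto intro!: derivative_eq_intros simp: fun_eq_iff inner_commute field_simps power2_eq_square)
next
  fix y :: complex
  assume "y \<in> {y. 3 * R\<^sup>2 < 4 * ((y - c) \<bullet> (y - c))}"
  then have "16 * ((y - c) \<bullet> (y - c)) / R\<^sup>2 - 12 > 0"
    using assms by (simp add: field_simps)
  moreover have "((2 * (-2 * ((y - c) \<bullet> 1)) / R\<^sup>2) * (-2 * ((y - c) \<bullet> 1))
                 + (1 + 2 * (R\<^sup>2 - (y - c) \<bullet> (y - c)) / R\<^sup>2) * (-2 * ((1::complex) \<bullet> 1)))
               + ((2 * (-2 * ((y - c) \<bullet> \<i>)) / R\<^sup>2) * (-2 * ((y - c) \<bullet> \<i>))
                 + (1 + 2 * (R\<^sup>2 - (y - c) \<bullet> (y - c)) / R\<^sup>2) * (-2 * (\<i> \<bullet> \<i>)))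
             = 16 * ((y - c) \<bullet> (y - c)) / R\<^sup>2 - 12"
    using assms by (simp add: inner_complex_def field_simps power2_eq_square)
  ultimately show "0 < \<epsilon> * ((2 * (-2 * ((y - c) \<bullet> 1)) / R\<^sup>2) * (-2 * ((y - c) \<bullet> 1))
                 + (1 + 2 * (R\<^sup>2 - (y - c) \<bullet> (y - c)) / R\<^sup>2) * (-2 * ((1::complex) \<bullet> 1)))
             + \<epsilon> * ((2 * (-2 * ((y - c) \<bullet> \<i>)) / R\<^sup>2) * (-2 * ((y - c) \<bullet> \<i>))
                 + (1 + 2 * (R\<^sup>2 - (y - c) \<bullet> (y - c)) / R\<^sup>2) * (-2 * (\<i> \<bullet> \<i>)))"
    using assms by (simp only: distrib_left[symmetric]) simp
qed

lemma hopf_barrier_comparison: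
  fixes h :: "complex \<Rightarrow> real"
  assumes R: "R > 0" and hc: "continuous_on (cball c R) h"
   and lap: "laplacian_nonneg_on h (ball c R)"
   and outer: "\<And>z. z \<in> sphere c R \<Longrightarrow> h z \<le> 0"
   and M: "M > 0" and inner: "\<And>z. z \<in> sphere c (9/10 * R) \<Longrightarrow> h z \<le> - M"
   and y: "y \<in> cball c R - ball c (9/10 * R)"
  shows "h y + M / R\<^sup>2 * ((R\<^sup>2 - (y - c) \<bullet> (y - c)) + (R\<^sup>2 - (y - c) \<bullet> (y - c))\<^sup>2 / R\<^sup>2) \<le> 0"
proof -
  define r where "r = 9/10 * R"
  define \<epsilon> where "\<epsilon> = M / R\<^sup>2"
  have eps: "\<epsilon> > 0" using M R by (simp add: \<epsilon>_def)
  define q where "q = (\<lambda>y. R\<^sup>2 - (y - c) \<bullet> (y - c))"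
  have qn: "q y = R\<^sup>2 - (norm (y - c))\<^sup>2" for y
    by (simp add: q_def power2_norm_eq_inner)
  define K S where "K = cball c R - ball c r" and "S = ball c R - cball c r"
  have "h y + \<epsilon> * (q y + (q y)\<^sup>2 / R\<^sup>2) \<le> 0"
  proof (rule maximum_principle_laplacian_pos[of K S])
    show "compact K" unfolding K_def by (intro compact_diff compact_cball open_ball)
    show "open S" unfolding S_def by (intro open_Diff open_ball closed_cball)
    show "S \<subseteq> K" unfolding S_def K_def by auto
    show "continuous_on K (\<lambda>y. h y + \<epsilon> * (q y + (q y)\<^sup>2 / R\<^sup>2))" unfolding q_def
      by (intro continuous_intros continuous_on_subset[OF hc]) (use R in \<open>auto simp: K_def\<close>)
    have "S \<subseteq> {y. 3 * R\<^sup>2 < 4 * ((y - c) \<bullet> (y - c))}"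
    proof
      fix y assume "y \<in> S"
      then have "r < norm (y - c)" by (simp add: S_def dist_norm norm_minus_commute)
      then have "r\<^sup>2 < (norm (y - c))\<^sup>2" using R by (simp add: r_def power_strict_mono)
      then have "81/100 * R\<^sup>2 < (y - c) \<bullet> (y - c)"
        by (simp add: power2_norm_eq_inner r_def power_mult_distrib power_divide)
      moreover have "R\<^sup>2 > 0" using R by simp
      ultimately have "3 * R\<^sup>2 < 4 * ((y - c) \<bullet> (y - c))" by linarith
      then show "y \<in> {y. 3 * R\<^sup>2 < 4 * ((y - c) \<bullet> (y - c))}" by simp
    qed
    then have "laplacian_pos_on (\<lambda>y. \<epsilon> * (q y + (q y)\<^sup>2 / R\<^sup>2)) S"
      unfolding q_def by (rule laplacian_pos_on_subset[OF laplacian_pos_on_hopf_barrier[OF eps R]])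
    moreover have "laplacian_nonneg_on h S"
      by (rule laplacian_nonneg_on_subset[OF lap]) (auto simp: S_def)
    ultimately show "laplacian_pos_on (\<lambda>y. h y + \<epsilon> * (q y + (q y)\<^sup>2 / R\<^sup>2)) S"
      by (intro laplacian_pos_on_add)
    show "h y + \<epsilon> * (q y + (q y)\<^sup>2 / R\<^sup>2) \<le> 0" if "y \<in> K" "y \<notin> S" for y
    proof -
      have "norm (y - c) = R \<or> norm (y - c) = r"
        using that by (auto simp: K_def S_def dist_norm norm_minus_commute)
      then show ?thesis
      proof
        assume "norm (y - c) = R"
        then have "q y = 0" "y \<in> sphere c R" by (auto simp: qn dist_norm norm_minus_commute)
        then show ?thesis using outer by simp
      next
        assume y: "norm (y - c) = r"
        have qy: "q y = 19/100 * R\<^sup>2"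
          unfolding qn y r_def by (simp add: power2_eq_square)
        have "\<epsilon> * (q y + (q y)\<^sup>2 / R\<^sup>2) = 2261/10000 * M"
          unfolding qy using R by (simp add: \<epsilon>_def field_simps power2_eq_square)
        moreover have "h y \<le> - M"
          using inner[of y] y by (simp add: r_def dist_norm norm_minus_commute)
        ultimately show ?thesis using M by simp
      qed
    qed
  qed (use y in \<open>simp add: K_def r_def\<close>)
  then show ?thesis by (simp add: \<epsilon>_def q_def)
qed

lemma hopf_boundary_decay:
  fixes h :: "complex \<Rightarrow> real"
  assumes R: "R > 0" and hc: "continuous_on (cball c R) h"
   and lap: "laplacian_nonneg_on h (ball c R)"
   and neg: "\<And>z. z \<in> ball c R \<Longrightarrow> h z < 0"
   and bd: "\<And>z. z \<in> sphere c R \<Longrightarrow> h z \<le> 0"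
   and x0: "x0 \<in> sphere c R"
  obtains \<delta> where "\<delta> > 0" "\<And>t. 0 < t \<Longrightarrow> t \<le> 1/10 \<Longrightarrow> h (x0 + t *\<^sub>R (c - x0)) \<le> - \<delta> * t"
proof -
  have "sphere c (9/10 * R) \<noteq> {}" "continuous_on (sphere c (9/10 * R)) h"
    using R by (auto intro: continuous_on_subset[OF hc])
  then obtain y1 where y1: "y1 \<in> sphere c (9/10 * R)" "\<And>y. y \<in> sphere c (9/10 * R) \<Longrightarrow> h y \<le> h y1"
    using continuous_attains_sup[OF compact_sphere] by blast
  have M: "- h y1 > 0" using neg[of y1] y1 R by simp
  show ?thesis
  proof (rule that[OF M])
    fix t :: real
    assume t: "0 < t" "t \<le> 1/10"
    define z where "z = x0 + t *\<^sub>R (c - x0)"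
    have "norm (x0 - c) = R" using x0 by (simp add: dist_norm norm_minus_commute)
    moreover have "z - c = (1 - t) *\<^sub>R (x0 - c)" by (simp add: z_def algebra_simps)
    ultimately have nz: "norm (z - c) = (1 - t) * R" using t by simp
    then have "z \<in> cball c R - ball c (9/10 * R)" using t R
      by (auto simp: dist_norm norm_minus_commute mult_right_mono intro!: mult_left_le_one_le)
    from hopf_barrier_comparison[OF R hc lap bd M _ this] y1(2)
    have "h z + - h y1 / R\<^sup>2 * (R\<^sup>2 * (2 * t - t\<^sup>2) + (R\<^sup>2 * (2 * t - t\<^sup>2))\<^sup>2 / R\<^sup>2) \<le> 0"
      using nz by (simp add: power2_norm_eq_inner[symmetric] algebra_simps power2_eq_square)
    moreover have "- h y1 / R\<^sup>2 * (R\<^sup>2 * t) \<le> - h y1 / R\<^sup>2 * (R\<^sup>2 * (2 * t - t\<^sup>2) + (R\<^sup>2 * (2 * t - t\<^sup>2))\<^sup>2 / R\<^sup>2)"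
      using M t R by (intro mult_left_mono) (auto simp: power2_eq_square divide_nonpos_pos intro!: add_increasing2)
    moreover have "- h y1 / R\<^sup>2 * (R\<^sup>2 * t) = - h y1 * t" using R by simp
    ultimately show "h (x0 + t *\<^sub>R (c - x0)) \<le> - (- h y1) * t" by (simp add: z_def)
  qed
qed

lemma hopf_lemma:
  fixes h :: "complex \<Rightarrow> real"
  assumes R: "R > 0" and hc: "continuous_on (cball c R) h"
   and lap: "laplacian_nonneg_on h (ball c R)"
   and neg: "\<And>z. z \<in> ball c R \<Longrightarrow> h z < 0"
   and bd: "\<And>z. z \<in> sphere c R \<Longrightarrow> h z \<le> 0"
   and x0: "x0 \<in> sphere c R" "h x0 = 0"
   and H: "(h has_derivative H) (at x0 within cball c R)"
  shows "H (c - x0) < 0"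
proof -
  obtain \<delta> where \<delta>: "\<delta> > 0" "\<And>t. 0 < t \<Longrightarrow> t \<le> 1/10 \<Longrightarrow> h (x0 + t *\<^sub>R (c - x0)) \<le> - \<delta> * t"
    using hopf_boundary_decay[OF R hc lap neg bd x0(1)] by blast
  define g where "g = (\<lambda>t. h (x0 + t *\<^sub>R (c - x0)))"
  have img: "(\<lambda>t. x0 + t *\<^sub>R (c - x0)) ` {0..1} \<subseteq> cball c R"
  proof clarify
    fix t :: real assume "t \<in> {0..1}"
    have "c - (x0 + t *\<^sub>R (c - x0)) = (1 - t) *\<^sub>R (c - x0)" by (simp add: algebra_simps)
    then have "dist c (x0 + t *\<^sub>R (c - x0)) = (1 - t) * dist c x0"
      using \<open>t \<in> {0..1}\<close> by (simp add: dist_norm)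
    then show "x0 + t *\<^sub>R (c - x0) \<in> cball c R"
      using x0 \<open>t \<in> {0..1}\<close> R by (simp add: mult_left_le_one_le)
  qed
  have "(g has_real_derivative H (c - x0)) (at 0 within {0..1})"
    unfolding g_def by (rule has_real_derivative_along_line[OF _ img]) (use H in simp)
  then have "(g has_real_derivative H (c - x0)) (at_right 0)"
    by (simp add: at_within_Icc_at_right)
  then have "((\<lambda>t. g t / t) \<longlongrightarrow> H (c - x0)) (at_right 0)"
    using x0(2) by (simp add: has_field_derivative_iff g_def)
  moreover have "\<forall>\<^sub>F t in at_right 0. g t / t \<le> - \<delta>"
  proof -
    have "\<forall>\<^sub>F t in at_right (0::real). t \<in> {0<..<1/10}"
      by (rule eventually_at_right_real) simp
    then show ?thesis
      by (rule eventually_mono) (use \<delta>(2) in \<open>auto simp: g_def divide_le_eq\<close>)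
  qed
  ultimately have "H (c - x0) \<le> - \<delta>"
    by (rule tendsto_upperbound) simp
  with \<delta>(1) show ?thesis by simp
qed

lemma exists_ball_touching_zero_set:
  fixes h :: "'a::euclidean_space \<Rightarrow> real"
  assumes S: "open S" "connected S" and hc: "continuous_on S h"
    and le: "\<And>z. z \<in> S \<Longrightarrow> h z \<le> 0"
    and x1: "x1 \<in> S" "h x1 = 0" and \<zeta>: "\<zeta> \<in> S" "h \<zeta> < 0"
  obtains y \<rho> x0 where "\<rho> > 0" "cball y \<rho> \<subseteq> S" "\<And>z. z \<in> ball y \<rho> \<Longrightarrow> h z < 0"
    "x0 \<in> sphere y \<rho>" "h x0 = 0"
proof -
  define Z where "Z = {x \<in> S. h x = 0}"
  have "closedin (top_of_set S) Z"
    unfolding Z_def by (rule continuous_closedin_preimage_constant[OF hc])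
  moreover have "x1 \<in> Z" "\<zeta> \<in> S - Z" using x1 \<zeta> by (auto simp: Z_def)
  ultimately have "\<not> openin (top_of_set S) Z"
    using S(2) unfolding connected_clopen by (metis Diff_iff empty_iff)
  then obtain x where xZ: "x \<in> Z" and nz: "\<And>e. e > 0 \<Longrightarrow> \<not> ball x e \<inter> S \<subseteq> Z"
    unfolding openin_contains_ball Z_def by blast
  obtain \<kappa> where \<kappa>: "\<kappa> > 0" "cball x \<kappa> \<subseteq> S"
    using S(1) xZ by (auto simp: Z_def open_contains_cball)
  have "\<not> ball x (\<kappa>/2) \<inter> S \<subseteq> Z" using nz \<kappa> by simp
  then obtain y where y: "y \<in> ball x (\<kappa>/2)" "y \<in> S" "y \<notin> Z" by blast
  define Z' where "Z' = {u \<in> cball x \<kappa>. h u = 0}"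
  have "closedin (top_of_set (cball x \<kappa>)) Z'"
    unfolding Z'_def by (rule continuous_closedin_preimage_constant[OF continuous_on_subset[OF hc \<kappa>(2)]])
  then have "closed Z'" using closedin_closed_trans closed_cball by blast
  moreover have xZ': "x \<in> Z'" using xZ \<kappa> by (auto simp: Z_def Z'_def)
  ultimately obtain x0 where x0: "x0 \<in> Z'" "\<And>u. u \<in> Z' \<Longrightarrow> dist y x0 \<le> dist y u"
    using distance_attains_inf by blast
  define \<rho> where "\<rho> = dist y x0"
  have "\<rho> \<le> dist y x" using x0(2)[OF xZ'] by (simp add: \<rho>_def)
  have cb: "cball y \<rho> \<subseteq> cball x \<kappa>"
  proof
    fix u assume "u \<in> cball y \<rho>"
    then have "dist x u \<le> dist x y + \<rho>" using dist_triangle[of x u y] by simp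
    then show "u \<in> cball x \<kappa>" using \<open>\<rho> \<le> dist y x\<close> y(1) by (simp add: dist_commute)
  qed
  show ?thesis
  proof
    show "\<rho> > 0" using x0(1) y by (auto simp: \<rho>_def Z_def Z'_def)
    show "cball y \<rho> \<subseteq> S" using cb \<kappa>(2) by blast
    show "h z < 0" if "z \<in> ball y \<rho>" for z
    proof -
      have "z \<in> cball x \<kappa>" using that cb by (meson ball_subset_cball subsetD)
      moreover have "dist y z < dist y x0" using that by (simp add: \<rho>_def)
      ultimately have "h z \<noteq> 0" using x0(2)[of z] by (force simp: Z'_def)
      with le show ?thesis using \<open>z \<in> cball x \<kappa>\<close> \<kappa>(2) by fastforce
    qed
    show "x0 \<in> sphere y \<rho>" "h x0 = 0" using x0(1) by (auto simp: \<rho>_def Z'_def)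
  qed
qed

lemma strong_maximum_principle:
  fixes h :: "complex \<Rightarrow> real"
  assumes hc: "continuous_on (cball c R) h" and lap: "laplacian_nonneg_on h (ball c R)"
    and le: "\<And>z. z \<in> cball c R \<Longrightarrow> h z \<le> 0"
    and \<zeta>: "\<zeta> \<in> cball c R" "h \<zeta> < 0"
    and x1: "x1 \<in> ball c R"
  shows "h x1 < 0"
proof (rule ccontr)
  assume "\<not> h x1 < 0"
  moreover have "h x1 \<le> 0" using le x1 by auto
  ultimately have "h x1 = 0" by linarith
  have "R > 0" using x1 by (metis mem_ball zero_le_dist le_less_trans)
  have "\<exists>\<zeta>'\<in>ball c R. h \<zeta>' < 0"
  proof (rule ccontr)
    assume "\<not> (\<exists>\<zeta>'\<in>ball c R. h \<zeta>' < 0)"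
    have "continuous_on (closure (ball c R)) h" using hc \<open>R > 0\<close> by simp
    moreover have "h z = 0" if "z \<in> ball c R" for z
    proof -
      have "\<not> h z < 0" "h z \<le> 0" using \<open>\<not> (\<exists>\<zeta>'\<in>ball c R. h \<zeta>' < 0)\<close> that le[of z] by auto
      then show ?thesis by linarith
    qed
    moreover have "\<zeta> \<in> closure (ball c R)" using \<zeta> \<open>R > 0\<close> by simp
    ultimately have "h \<zeta> = 0" by (rule continuous_constant_on_closure)
    then show False using \<zeta> by simp
  qed
  then obtain \<zeta>' where \<zeta>': "\<zeta>' \<in> ball c R" "h \<zeta>' < 0" by blast
  obtain h' where h': "\<And>z. z \<in> ball c R \<Longrightarrow> (h has_derivative h' z) (at z)"
    using lap unfolding laplacian_nonneg_on_def by blast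
  obtain y \<rho> x0 where \<rho>: "\<rho> > 0" "cball y \<rho> \<subseteq> ball c R" "\<And>z. z \<in> ball y \<rho> \<Longrightarrow> h z < 0"
      and x0: "x0 \<in> sphere y \<rho>" "h x0 = 0"
  proof (rule exists_ball_touching_zero_set[OF open_ball connected_ball _ _ x1 \<open>h x1 = 0\<close> \<zeta>'])
    show "continuous_on (ball c R) h" by (rule continuous_on_subset[OF hc ball_subset_cball])
    show "h z \<le> 0" if "z \<in> ball c R" for z using le that by simp
  qed blast
  have x0b: "x0 \<in> ball c R" using x0(1) \<rho>(2) by auto
  have "h' x0 = (\<lambda>v. 0)"
  proof (rule has_derivative_local_max[OF h'[OF x0b]])
    obtain r where r: "r > 0" "ball x0 r \<subseteq> ball c R" using x0b open_contains_ball open_ball by blast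
    show "\<forall>\<^sub>F u in at x0. h u \<le> h x0"
      by (rule eventually_mono[OF eventually_at_ball[OF r(1), of x0 UNIV]]) (use r le x0(2) in auto)
  qed
  moreover have "h' x0 (y - x0) < 0"
  proof (rule hopf_lemma[OF \<rho>(1)])
    show "continuous_on (cball y \<rho>) h"
      using \<rho>(2) by (intro continuous_on_subset[OF hc]) auto
    show "laplacian_nonneg_on h (ball y \<rho>)"
      using \<rho>(2) by (intro laplacian_nonneg_on_subset[OF lap]) auto
    show "h z \<le> 0" if "z \<in> sphere y \<rho>" for z using le that \<rho>(2) by auto
    show "(h has_derivative h' x0) (at x0 within cball y \<rho>)"
      using h'[OF x0b] by (rule has_derivative_at_withinI)
  qed (use \<rho> x0 in auto)
  ultimately show False by simp
qed

lemma hopf_lemma_sphere: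
  fixes h :: "complex \<Rightarrow> real"
  assumes R: "R > 0" and hc: "continuous_on (cball c R) h"
   and lap: "laplacian_nonneg_on h (ball c R)"
   and bd: "\<And>z. z \<in> sphere c R \<Longrightarrow> h z \<le> 0"
   and \<zeta>: "\<zeta> \<in> sphere c R" "h \<zeta> < 0"
   and x0: "x0 \<in> sphere c R" "h x0 = 0"
   and H: "(h has_derivative H) (at x0 within cball c R)"
  shows "H (c - x0) < 0"
proof (rule hopf_lemma[OF R hc lap _ bd x0 H])
  have "h z \<le> 0" if "z \<in> cball c R" for z
    by (rule weak_maximum_principle[OF R hc lap bd that])
  then show "h z < 0" if "z \<in> ball c R" for z
    by (rule strong_maximum_principle[OF hc lap _ _ \<zeta>(2) that]) (use \<zeta> in auto)
qed

section \<open>Winding numbers at a supporting tangent\<close>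

lemma cis_eq_cis_iff: "cis a = cis b \<longleftrightarrow> (\<exists>n::int. a = b + 2 * pi * n)"
proof -
  have "cis a = cis b \<longleftrightarrow> sin a = sin b \<and> cos a = cos b" by (auto simp: complex_eq_iff)
  then show ?thesis by (simp add: sin_cos_eq_iff)
qed

lemma cis_eq_cis_unit_interval:
  assumes "cis (a + 2 * pi * x) = cis (a + 2 * pi * y)" "x \<in> {0..1}" "y \<in> {0..1}"
  shows "x = y \<or> x = 0 \<and> y = 1 \<or> x = 1 \<and> y = 0"
proof -
  obtain n :: int where "a + 2 * pi * x = a + 2 * pi * y + 2 * pi * n"
    using assms(1) cis_eq_cis_iff by blast
  then have "2 * pi * x = 2 * pi * (y + n)" by (simp add: algebra_simps)
  then have "x = y + n" by simp
  moreover from this have "n = -1 \<or> n = 0 \<or> n = 1" using assms(2,3) by auto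
  ultimately show ?thesis using assms(2,3) by auto
qed

lemma winding_number_linepath_Ln:
  fixes A B z u :: complex
  assumes u: "u \<noteq> 0" and pa: "Re ((A - z) / u) > 0" and pb: "Re ((B - z) / u) > 0"
  shows "winding_number (linepath A B) z = (Ln ((B - z) / u) - Ln ((A - z) / u)) / (2 * pi * \<i>)"
proof -
  define S where "S = {\<zeta>. Re ((\<zeta> - z) / u) > 0}"
  have "convex S"
  proof -
    have "S = {\<zeta>. u \<bullet> \<zeta> > u \<bullet> z}"
      using u complex_neq_0[of u]
      by (auto simp: S_def Re_divide zero_less_divide_iff inner_complex_def algebra_simps)
    then show ?thesis by (simp add: convex_halfspace_gt)
  qed
  then have seg: "closed_segment A B \<subseteq> S"
    using pa pb by (simp add: S_def closed_segment_subset)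
  have znot: "z \<notin> path_image (linepath A B)" using seg by (auto simp: S_def)
  have der: "((\<lambda>\<zeta>. Ln ((\<zeta> - z) / u)) has_field_derivative 1 / (\<zeta> - z)) (at \<zeta> within S)"
    if "\<zeta> \<in> S" for \<zeta>
  proof -
    have re: "Re ((\<zeta> - z) / u) > 0" using that by (simp add: S_def)
    then have "(\<zeta> - z) / u \<notin> \<real>\<^sub>\<le>\<^sub>0" by (auto simp: complex_nonpos_Reals_iff)
    then have "((\<lambda>\<zeta>. Ln ((\<zeta> - z) / u)) has_field_derivative inverse ((\<zeta> - z) / u) * (1 / u)) (at \<zeta>)"
      using u by (auto intro!: derivative_eq_intros)
    moreover have "inverse ((\<zeta> - z) / u) * (1 / u) = 1 / (\<zeta> - z)" using u re by (auto simp: field_simps)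
    ultimately show ?thesis by (simp add: has_field_derivative_at_within)
  qed
  have "((\<lambda>w. 1 / (w - z)) has_contour_integral (Ln ((B - z) / u) - Ln ((A - z) / u))) (linepath A B)"
    using contour_integral_primitive[OF der valid_path_linepath, of A B] seg by simp
  then show ?thesis
    using contour_integral_unique winding_number_valid_path[OF valid_path_linepath znot] by simp
qed

lemma winding_number_linepath_across:
  fixes p \<nu> :: complex and m s :: real
  assumes "\<nu> \<noteq> 0" "s > 0"
  shows "Re (winding_number (linepath (p - of_real m * (\<i> * \<nu>)) (p + of_real m * (\<i> * \<nu>))) (p - of_real s * \<nu>)
           - winding_number (linepath (p - of_real m * (\<i> * \<nu>)) (p + of_real m * (\<i> * \<nu>))) (p + of_real s * \<nu>))
         = 2 * arctan (m / s) / pi"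
proof -
  define A where "A = p - of_real m * (\<i> * \<nu>)"
  define B where "B = p + of_real m * (\<i> * \<nu>)"
  define Zp where "Zp = of_real s + \<i> * of_real m"
  define Zm where "Zm = of_real s - \<i> * of_real m"
  have "A - (p - of_real s * \<nu>) = Zm * \<nu>" "B - (p - of_real s * \<nu>) = Zp * \<nu>"
       "A - (p + of_real s * \<nu>) = Zp * - \<nu>" "B - (p + of_real s * \<nu>) = Zm * - \<nu>"
    by (simp_all add: A_def B_def Zp_def Zm_def algebra_simps)
  then have e: "(A - (p - of_real s * \<nu>)) / \<nu> = Zm" "(B - (p - of_real s * \<nu>)) / \<nu> = Zp"
       "(A - (p + of_real s * \<nu>)) / - \<nu> = Zp" "(B - (p + of_real s * \<nu>)) / - \<nu> = Zm"
    using assms(1) by simp_all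
  have "Re Zp > 0" "Re Zm > 0" using assms by (simp_all add: Zp_def Zm_def)
  then have "winding_number (linepath A B) (p - of_real s * \<nu>) = (Ln Zp - Ln Zm) / (2 * pi * \<i>)"
      "winding_number (linepath A B) (p + of_real s * \<nu>) = (Ln Zm - Ln Zp) / (2 * pi * \<i>)"
    using winding_number_linepath_Ln[of \<nu> A "p - of_real s * \<nu>" B]
      winding_number_linepath_Ln[of "- \<nu>" A "p + of_real s * \<nu>" B] assms(1)
    unfolding e by simp_all
  moreover have "Im (Ln Zp) = arctan (m / s)" "Im (Ln Zm) = - arctan (m / s)"
    using assms by (auto simp: Zp_def Zm_def Arg_eq_Im_Ln[symmetric] arg_conv_arctan arctan_minus
                          complex_eq_iff)
  moreover have "Re ((X - Y) / (2 * pi * \<i>) - (Y - X) / (2 * pi * \<i>)) = (Im X - Im Y) / pi"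
    for X Y :: complex
  proof -
    have "(X - Y) / (2 * pi * \<i>) - (Y - X) / (2 * pi * \<i>) = - \<i> * (X - Y) / of_real pi"
      by (simp add: field_simps)
    then show ?thesis by (simp add: Re_divide power2_eq_square field_simps)
  qed
  ultimately show ?thesis by (simp add: A_def B_def)
qed

lemma convex_halfspace_le_at: "convex {y. (y - p) \<bullet> \<nu> \<le> 0}"
proof -
  have "(y - p) \<bullet> \<nu> = \<nu> \<bullet> y - \<nu> \<bullet> p" for y
    by (metis inner_commute inner_diff_left)
  then have "{y. (y - p) \<bullet> \<nu> \<le> 0} = {y. \<nu> \<bullet> y \<le> \<nu> \<bullet> p}" by auto
  then show ?thesis by (simp add: convex_halfspace_le)
qed

lemma winding_number_near_point:
  assumes \<gamma>: "path \<gamma>" "p \<notin> path_image \<gamma>" and "\<epsilon> > 0"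
  obtains r where "r > 0" "\<And>z. dist z p < r \<Longrightarrow>
    z \<notin> path_image \<gamma> \<and> norm (winding_number \<gamma> z - winding_number \<gamma> p) < \<epsilon>"
proof -
  obtain r1 where r1: "r1 > 0" "ball p r1 \<subseteq> - path_image \<gamma>"
    using open_contains_ball closed_path_image[OF \<gamma>(1)] \<gamma>(2) by (metis ComplI open_Compl)
  obtain r2 where r2: "r2 > 0" "\<And>z. dist z p < r2 \<Longrightarrow> dist (winding_number \<gamma> z) (winding_number \<gamma> p) < \<epsilon>"
    using continuous_at_winding_number[OF \<gamma>] \<open>\<epsilon> > 0\<close> unfolding continuous_at_eps_delta by blast
  show ?thesis
    by (rule that[of "min r1 r2"]) (use r1 r2 in \<open>auto simp: dist_norm subset_iff norm_minus_commute\<close>)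
qed

lemma winding_number_subpath_split3:
  assumes "path g" "z \<notin> path_image g" "0 \<le> a" "a \<le> b" "b \<le> 1"
  shows "winding_number g z = winding_number (subpath 0 a g) z + winding_number (subpath a b g) z
           + winding_number (subpath b 1 g) z"
  using winding_number_subpath_combine[OF assms(1,2), of 0 a b]
    winding_number_subpath_combine[OF assms(1,2), of 0 b 1] assms(3-5)
  by simp

lemma has_vector_derivative_segment_transversal:
  fixes g :: "real \<Rightarrow> 'a::real_inner"
  assumes g: "(g has_vector_derivative v) (at x0)" and v: "v \<noteq> 0"
  obtains \<eta> where "\<eta> > 0" "\<And>x y. 0 < \<bar>x - x0\<bar> \<Longrightarrow> \<bar>x - x0\<bar> \<le> \<eta> \<Longrightarrow>
      y \<in> closed_segment (g x) (g x0 + (x - x0) *\<^sub>R v) \<Longrightarrow> (x - x0) * ((y - g x0) \<bullet> v) > 0"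
proof -
  have "norm v / 2 > 0" using v by simp
  then obtain d where d: "d > 0"
      "\<And>x. norm (x - x0) < d \<Longrightarrow> norm (g x - g x0 - (x - x0) *\<^sub>R v) \<le> norm v / 2 * norm (x - x0)"
    using g unfolding has_vector_derivative_def has_derivative_at_alt by blast
  show ?thesis
  proof (rule that[of "d/2"])
    fix x y
    assume x: "0 < \<bar>x - x0\<bar>" "\<bar>x - x0\<bar> \<le> d/2"
      and y: "y \<in> closed_segment (g x) (g x0 + (x - x0) *\<^sub>R v)"
    define E where "E = g x - g x0 - (x - x0) *\<^sub>R v"
    have E: "norm E \<le> norm v / 2 * \<bar>x - x0\<bar>" using d(2)[of x] x by (simp add: E_def)
    obtain u where u: "0 \<le> u" "u \<le> 1" "y - g x0 = (x - x0) *\<^sub>R v + (1 - u) *\<^sub>R E"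
      using y by (auto simp: closed_segment_def E_def algebra_simps)
    have "\<bar>(1 - u) * (E \<bullet> v)\<bar> \<le> \<bar>E \<bullet> v\<bar>"
      using u by (simp add: abs_mult mult_left_le_one_le)
    also have "\<dots> \<le> norm E * norm v" by (rule Cauchy_Schwarz_ineq2)
    also have "\<dots> \<le> norm v / 2 * \<bar>x - x0\<bar> * norm v" by (rule mult_right_mono[OF E]) simp
    finally have "\<bar>x - x0\<bar> * \<bar>(1 - u) * (E \<bullet> v)\<bar> \<le> \<bar>x - x0\<bar> * (norm v / 2 * \<bar>x - x0\<bar> * norm v)"
      by (rule mult_left_mono) simp
    also have "\<dots> = \<bar>x - x0\<bar>\<^sup>2 * (norm v)\<^sup>2 / 2" by (simp add: power2_eq_square)
    finally have "\<bar>(x - x0) * ((1 - u) * (E \<bullet> v))\<bar> \<le> (x - x0)\<^sup>2 * (norm v)\<^sup>2 / 2"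
      by (simp add: abs_mult)
    moreover have "(x - x0) * ((y - g x0) \<bullet> v)
        = (x - x0)\<^sup>2 * (norm v)\<^sup>2 + (x - x0) * ((1 - u) * (E \<bullet> v))"
      using power2_norm_eq_inner[of v]
      by (simp add: u(3) power2_eq_square algebra_simps)
    moreover have "(x - x0)\<^sup>2 * (norm v)\<^sup>2 > 0" using x v by simp
    ultimately show "(x - x0) * ((y - g x0) \<bullet> v) > 0" by linarith
  qed (use d in simp)
qed

text \<open>The point \<open>p + s \<nu>\<close> lies outside the half-plane, so it has winding number \<open>0\<close>.
  Between \<open>p + s \<nu>\<close> and \<open>p - s \<nu>\<close> the straight piece makes the winding number drop by
  at least \<open>1/2\<close>, the rest of the curve changes it by less than \<open>1/4\<close> on each side.\<close>

lemma winding_number_straight_touch_estimate: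
  fixes h :: "real \<Rightarrow> complex" and p \<nu> :: complex and k \<delta> s :: real
  assumes h: "path h" "pathfinish h = pathstart h"
    and \<nu>: "\<nu> \<noteq> 0" and \<delta>: "0 < \<delta>" "\<delta> < 1/2" and s: "0 < s" "s \<le> - \<delta> * k"
    and line: "\<And>t. \<bar>t - 1/2\<bar> \<le> \<delta> \<Longrightarrow> h t = p + of_real ((t - 1/2) * k) * (\<i> * \<nu>)"
    and half: "path_image h \<subseteq> {y. (y - p) \<bullet> \<nu> \<le> 0}"
    and w: "p - of_real s * \<nu> \<notin> path_image h"
    and close1: "norm (winding_number (subpath 0 (1/2 - \<delta>) h) (p - of_real s * \<nu>)
                    - winding_number (subpath 0 (1/2 - \<delta>) h) (p + of_real s * \<nu>)) < 1/4"
    and close2: "norm (winding_number (subpath (1/2 + \<delta>) 1 h) (p - of_real s * \<nu>)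
                    - winding_number (subpath (1/2 + \<delta>) 1 h) (p + of_real s * \<nu>)) < 1/4"
  shows "Re (winding_number h (p - of_real s * \<nu>)) < 0"
proof -
  define w w' where "w = p - of_real s * \<nu>" and "w' = p + of_real s * \<nu>"
  define a b where "a = 1/2 - \<delta>" and "b = 1/2 + \<delta>"
  have ab: "0 \<le> a" "a \<le> b" "b \<le> 1" using \<delta> by (auto simp: a_def b_def)
  define A B where "A = p - of_real (\<delta> * k) * (\<i> * \<nu>)" and "B = p + of_real (\<delta> * k) * (\<i> * \<nu>)"
  have mid: "winding_number (subpath a b h) z = winding_number (linepath A B) z" for z
  proof (rule winding_number_cong)
    fix t :: real assume "0 \<le> t" "t \<le> 1"
    then have "\<bar>(b - a) * t + a - 1/2\<bar> \<le> \<delta>" using \<delta> by (auto simp: a_def b_def abs_le_iff)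
    then show "subpath a b h t = linepath A B t"
      by (simp add: subpath_def line linepath_def A_def B_def a_def b_def scaleR_conv_of_real algebra_simps)
  qed
  have "0 < s * (\<nu> \<bullet> \<nu>)" using s \<nu> by (intro mult_pos_pos) auto
  then have "w' \<notin> {y. (y - p) \<bullet> \<nu> \<le> 0}"
    by (simp add: w'_def flip: scaleR_conv_of_real)
  then have "winding_number h w' = 0" and w': "w' \<notin> path_image h"
    using winding_number_zero_outside[OF h(1) convex_halfspace_le_at h(2) _ half] half by blast+
  then have "winding_number h w = winding_number h w - winding_number h w'" by simp
  also have "\<dots> = winding_number (subpath 0 a h) w + winding_number (linepath A B) w
                    + winding_number (subpath b 1 h) w
                  - (winding_number (subpath 0 a h) w' + winding_number (linepath A B) w'
                    + winding_number (subpath b 1 h) w')"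
    using winding_number_subpath_split3[OF h(1) w[folded w_def] ab]
      winding_number_subpath_split3[OF h(1) w' ab]
    by (simp add: mid)
  also have "\<dots> = winding_number (subpath 0 a h) w - winding_number (subpath 0 a h) w'
          + (winding_number (linepath A B) w - winding_number (linepath A B) w')
          + (winding_number (subpath b 1 h) w - winding_number (subpath b 1 h) w')"
    by (simp add: algebra_simps)
  finally have "winding_number h w = \<dots>" .
  moreover have "Re (winding_number (linepath A B) w - winding_number (linepath A B) w') \<le> -1/2"
  proof -
    have "\<delta> * k / s \<le> -1" using s by (simp add: divide_le_eq)
    then have "arctan (\<delta> * k / s) \<le> - (pi / 4)"
      using arctan_le_iff[of "\<delta> * k / s" "-1"] by (simp add: arctan_minus)
    then show ?thesis
      using winding_number_linepath_across[OF \<nu>, of s p "\<delta> * k"] s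
      by (simp add: A_def B_def w_def w'_def divide_le_eq)
  qed
  moreover have "Re (winding_number (subpath 0 a h) w - winding_number (subpath 0 a h) w') < 1/4"
      "Re (winding_number (subpath b 1 h) w - winding_number (subpath b 1 h) w') < 1/4"
    using close1 close2 abs_Re_le_cmod[of "winding_number (subpath 0 a h) w - winding_number (subpath 0 a h) w'"]
      abs_Re_le_cmod[of "winding_number (subpath b 1 h) w - winding_number (subpath b 1 h) w'"]
    unfolding a_def b_def w_def w'_def by linarith+
  ultimately show ?thesis unfolding w_def by simp
qed

lemma winding_number_negative_at_straight_touch:
  fixes h :: "real \<Rightarrow> complex" and p \<nu> :: complex and k \<delta> :: real
  assumes h: "path h" "pathfinish h = pathstart h"
    and \<nu>: "\<nu> \<noteq> 0" and k: "k < 0" and \<delta>: "0 < \<delta>" "\<delta> < 1/2"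
    and line: "\<And>t. \<bar>t - 1/2\<bar> \<le> \<delta> \<Longrightarrow> h t = p + of_real ((t - 1/2) * k) * (\<i> * \<nu>)"
    and off: "\<And>t. t \<in> {0..1} \<Longrightarrow> \<delta> \<le> \<bar>t - 1/2\<bar> \<Longrightarrow> h t \<noteq> p"
    and half: "path_image h \<subseteq> {y. (y - p) \<bullet> \<nu> \<le> 0}"
  shows "\<forall>\<^sub>F s in at_right 0.
           p - of_real s * \<nu> \<notin> path_image h \<and> Re (winding_number h (p - of_real s * \<nu>)) < 0"
proof -
  define a b where "a = 1/2 - \<delta>" and "b = 1/2 + \<delta>"
  have ab: "0 \<le> a" "a \<le> b" "b \<le> 1" using \<delta> by (auto simp: a_def b_def)
  define \<rho>1 \<rho>2 where "\<rho>1 = subpath 0 a h" and "\<rho>2 = subpath b 1 h"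
  have paths: "path \<rho>1" "path \<rho>2" using h(1) ab by (simp_all add: \<rho>1_def \<rho>2_def)
  have "h t \<noteq> p" if "t \<in> {0..a} \<union> {b..1}" for t
    using that ab by (intro off) (auto simp: a_def b_def)
  then have "p \<notin> h ` {0..a}" "p \<notin> h ` {b..1}" by force+
  then have "p \<notin> path_image \<rho>1" "p \<notin> path_image \<rho>2"
    using ab by (simp_all add: \<rho>1_def \<rho>2_def path_image_subpath)
  then obtain r1 r2 where r1: "r1 > 0" "\<And>z. dist z p < r1 \<Longrightarrow>
        z \<notin> path_image \<rho>1 \<and> norm (winding_number \<rho>1 z - winding_number \<rho>1 p) < 1/8"
    and r2: "r2 > 0" "\<And>z. dist z p < r2 \<Longrightarrow>
        z \<notin> path_image \<rho>2 \<and> norm (winding_number \<rho>2 z - winding_number \<rho>2 p) < 1/8"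
    using winding_number_near_point[OF paths(1)] winding_number_near_point[OF paths(2)]
    by (metis zero_less_divide_iff zero_less_numeral zero_less_one)
  have "\<forall>\<^sub>F s in at_right (0::real). s \<in> {0<..<min (min r1 r2 / norm \<nu>) (- \<delta> * k)}"
    using r1 r2 \<nu> \<delta> k by (intro eventually_at_right_real) (simp add: mult_pos_neg)
  then show ?thesis
  proof (rule eventually_mono)
    fix s assume s: "s \<in> {0<..<min (min r1 r2 / norm \<nu>) (- \<delta> * k)}"
    define w w' where "w = p - of_real s * \<nu>" and "w' = p + of_real s * \<nu>"
    have "dist w p < r1" "dist w p < r2" "dist w' p < r1" "dist w' p < r2"
      using s \<nu> by (auto simp: w_def w'_def dist_norm norm_mult field_simps)
    moreover have "norm (winding_number \<rho> w - winding_number \<rho> w') < 1/4"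
      if "norm (winding_number \<rho> w - winding_number \<rho> p) < 1/8"
         "norm (winding_number \<rho> w' - winding_number \<rho> p) < 1/8" for \<rho>
      using that norm_triangle_ineq4[of "winding_number \<rho> w - winding_number \<rho> p"
          "winding_number \<rho> w' - winding_number \<rho> p"] by simp
    ultimately have near: "w \<notin> path_image \<rho>1" "w \<notin> path_image \<rho>2"
      "norm (winding_number \<rho>1 w - winding_number \<rho>1 w') < 1/4"
      "norm (winding_number \<rho>2 w - winding_number \<rho>2 w') < 1/4"
      using r1(2) r2(2) by blast+
    have "w \<noteq> h t" if "t \<in> {0..1}" for t
    proof (cases "\<bar>t - 1/2\<bar> \<le> \<delta>")
      case True
      have "of_real s + \<i> * of_real ((t - 1/2) * k) \<noteq> 0" using s by (simp add: complex_eq_iff)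
      then have "\<nu> * (of_real s + \<i> * of_real ((t - 1/2) * k)) \<noteq> 0" using \<nu> by simp
      then show ?thesis using line[OF True] by (auto simp: w_def algebra_simps)
    next
      case False
      then have "t \<in> {0..a} \<or> t \<in> {b..1}" using that by (auto simp: a_def b_def)
      then show ?thesis using near(1,2) ab by (auto simp: \<rho>1_def \<rho>2_def path_image_subpath)
    qed
    then have "w \<notin> path_image h" unfolding path_image_def by blast
    moreover have "Re (winding_number h w) < 0"
      unfolding w_def by (rule winding_number_straight_touch_estimate[OF h \<nu> \<delta> _ _ line half])
         (use s calculation near(3,4) in \<open>simp_all add: w_def w'_def \<rho>1_def \<rho>2_def a_def b_def\<close>)
    ultimately show "p - of_real s * \<nu> \<notin> path_image h \<and> Re (winding_number h (p - of_real s * \<nu>)) < 0"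
      by (simp add: w_def)
  qed
qed

definition blend_at_half :: "real \<Rightarrow> (real \<Rightarrow> 'a::real_vector) \<Rightarrow> (real \<Rightarrow> 'a) \<Rightarrow> real \<Rightarrow> 'a" where
  "blend_at_half \<eta> g L x = g x + max 0 (min 1 (2 - 2 * \<bar>x - 1/2\<bar> / \<eta>)) *\<^sub>R (L x - g x)"

lemma blend_at_half_in_segment: "blend_at_half \<eta> g L x \<in> closed_segment (g x) (L x)"
proof -
  define \<phi> where "\<phi> = max 0 (min 1 (2 - 2 * \<bar>x - 1/2\<bar> / \<eta>))"
  have "blend_at_half \<eta> g L x = (1 - \<phi>) *\<^sub>R g x + \<phi> *\<^sub>R L x"
    by (simp add: blend_at_half_def \<phi>_def algebra_simps)
  moreover have "0 \<le> \<phi>" "\<phi> \<le> 1" by (auto simp: \<phi>_def)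
  ultimately show ?thesis by (auto simp: closed_segment_def)
qed

lemma blend_at_half_outer: "\<eta> > 0 \<Longrightarrow> \<eta> \<le> \<bar>x - 1/2\<bar> \<Longrightarrow> blend_at_half \<eta> g L x = g x"
  by (simp add: blend_at_half_def le_divide_eq)

lemma blend_at_half_inner: "\<eta> > 0 \<Longrightarrow> \<bar>x - 1/2\<bar> \<le> \<eta>/2 \<Longrightarrow> blend_at_half \<eta> g L x = L x"
  by (simp add: blend_at_half_def divide_le_eq)

lemma continuous_on_blend_at_half:
  fixes g L :: "real \<Rightarrow> 'a::real_normed_vector"
  shows "\<eta> \<noteq> 0 \<Longrightarrow> continuous_on S g \<Longrightarrow> continuous_on S L \<Longrightarrow> continuous_on S (blend_at_half \<eta> g L)"
  unfolding blend_at_half_def by (intro continuous_intros) auto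

lemma path_blend_at_half:
  fixes g L :: "real \<Rightarrow> 'a::real_normed_vector"
  assumes "path g" "pathfinish g = pathstart g" "0 < \<eta>" "\<eta> \<le> 1/2" "continuous_on {0..1} L"
  shows "path (blend_at_half \<eta> g L)" "pathfinish (blend_at_half \<eta> g L) = pathstart (blend_at_half \<eta> g L)"
proof -
  show "path (blend_at_half \<eta> g L)"
    unfolding path_def by (rule continuous_on_blend_at_half) (use assms in \<open>auto simp: path_def\<close>)
  show "pathfinish (blend_at_half \<eta> g L) = pathstart (blend_at_half \<eta> g L)"
    using assms blend_at_half_outer[of \<eta> 0 g L] blend_at_half_outer[of \<eta> 1 g L]
    by (simp add: pathstart_def pathfinish_def)
qed

lemma tangent_window:
  fixes g :: "real \<Rightarrow> complex" and \<nu> :: complex and k :: real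
  assumes g: "path g" and \<nu>: "\<nu> \<noteq> 0" and k: "k < 0"
    and deriv: "(g has_vector_derivative k *\<^sub>R (\<i> * \<nu>)) (at (1/2))"
    and touch: "\<And>t. t \<in> {0..1} \<Longrightarrow> g t = g (1/2) \<Longrightarrow> t = 1/2"
  obtains \<eta> r where "0 < \<eta>" "\<eta> \<le> 1/4" "r > 0"
    "\<And>x y. 0 < \<bar>x - 1/2\<bar> \<Longrightarrow> \<bar>x - 1/2\<bar> \<le> \<eta> \<Longrightarrow>
       y \<in> closed_segment (g x) (g (1/2) + ((x - 1/2) * k) *\<^sub>R (\<i> * \<nu>)) \<Longrightarrow>
       (y - g (1/2)) \<bullet> (\<i> * \<nu>) \<noteq> 0"
    "\<And>x. x \<in> {0..1} \<Longrightarrow> \<eta> \<le> \<bar>x - 1/2\<bar> \<Longrightarrow> r \<le> dist (g (1/2)) (g x)"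
proof -
  have "k *\<^sub>R (\<i> * \<nu>) \<noteq> 0" using k \<nu> by simp
  from has_vector_derivative_segment_transversal[OF deriv this] obtain \<eta>0 where "\<eta>0 > 0"
    and pos: "\<And>x y. 0 < \<bar>x - 1/2\<bar> \<Longrightarrow> \<bar>x - 1/2\<bar> \<le> \<eta>0 \<Longrightarrow>
      y \<in> closed_segment (g x) (g (1/2) + ((x - 1/2) * k) *\<^sub>R (\<i> * \<nu>)) \<Longrightarrow>
      (x - 1/2) * ((y - g (1/2)) \<bullet> (k *\<^sub>R (\<i> * \<nu>))) > 0"
    by (metis scaleR_scaleR)
  define \<eta> where "\<eta> = min \<eta>0 (1/4)"
  have \<eta>: "0 < \<eta>" "\<eta> \<le> \<eta>0" "\<eta> \<le> 1/4" using \<open>\<eta>0 > 0\<close> by (auto simp: \<eta>_def)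
  define F where "F = g ` ({0..1/2 - \<eta>} \<union> {1/2 + \<eta>..1})"
  have "compact F"
    unfolding F_def using g \<eta>
    by (intro compact_continuous_image compact_Un compact_Icc) (auto simp: path_def intro: continuous_on_subset)
  moreover have "g (1/2) \<notin> F"
  proof
    assume "g (1/2) \<in> F"
    then obtain t where t: "t \<in> {0..1/2 - \<eta>} \<union> {1/2 + \<eta>..1}" "g t = g (1/2)"
      unfolding F_def by (metis imageE)
    then have "t = 1/2" using touch[of t] \<eta> by auto
    then show False using t(1) \<eta> by auto
  qed
  ultimately obtain r where r: "r > 0" "\<And>y. y \<in> F \<Longrightarrow> r \<le> dist (g (1/2)) y"
    using separate_point_closed compact_imp_closed by metis
  show ?thesis
  proof (rule that[OF \<eta>(1,3) r(1)])
    fix x y assume "0 < \<bar>x - 1/2\<bar>" "\<bar>x - 1/2\<bar> \<le> \<eta>"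
      "y \<in> closed_segment (g x) (g (1/2) + ((x - 1/2) * k) *\<^sub>R (\<i> * \<nu>))"
    with pos[of x y] \<eta> show "(y - g (1/2)) \<bullet> (\<i> * \<nu>) \<noteq> 0" by auto
  next
    fix x assume "x \<in> {0..1}" "\<eta> \<le> \<bar>x - 1/2\<bar>"
    then have "g x \<in> F" by (auto simp: F_def abs_if split: if_splits)
    then show "r \<le> dist (g (1/2)) (g x)" by (rule r(2))
  qed
qed

lemma winding_number_negative_at_blend:
  fixes g :: "real \<Rightarrow> complex" and \<nu> :: complex and k \<eta> :: real
  defines "p \<equiv> g (1/2)" and "L \<equiv> \<lambda>x. g (1/2) + ((x - 1/2) * k) *\<^sub>R (\<i> * \<nu>)"
  assumes g: "path g" "pathfinish g = pathstart g"
    and \<nu>: "\<nu> \<noteq> 0" and k: "k < 0" and \<eta>: "0 < \<eta>" "\<eta> \<le> 1/4"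
    and transversal: "\<And>x y. 0 < \<bar>x - 1/2\<bar> \<Longrightarrow> \<bar>x - 1/2\<bar> \<le> \<eta> \<Longrightarrow>
       y \<in> closed_segment (g x) (L x) \<Longrightarrow> (y - p) \<bullet> (\<i> * \<nu>) \<noteq> 0"
    and far: "\<And>x. x \<in> {0..1} \<Longrightarrow> \<eta> \<le> \<bar>x - 1/2\<bar> \<Longrightarrow> g x \<noteq> p"
    and half: "path_image g \<subseteq> {y. (y - p) \<bullet> \<nu> \<le> 0}"
  shows "\<forall>\<^sub>F s in at_right 0. p - of_real s * \<nu> \<notin> path_image (blend_at_half \<eta> g L) \<and>
           Re (winding_number (blend_at_half \<eta> g L) (p - of_real s * \<nu>)) < 0"
proof (rule winding_number_negative_at_straight_touch[OF _ _ \<nu> k])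
  let ?h = "blend_at_half \<eta> g L"
  have "continuous_on {0..1} L" unfolding L_def by (intro continuous_intros)
  moreover have "\<eta> \<le> 1/2" using \<eta> by simp
  ultimately show "path ?h" "pathfinish ?h = pathstart ?h"
    using path_blend_at_half[OF g \<eta>(1)] by auto
  show "0 < \<eta>/2" "\<eta>/2 < 1/2" using \<eta> by auto
  show "?h t = p + of_real ((t - 1/2) * k) * (\<i> * \<nu>)" if "\<bar>t - 1/2\<bar> \<le> \<eta>/2" for t
    using that \<eta> by (simp add: blend_at_half_inner L_def p_def scaleR_conv_of_real)
  show "?h t \<noteq> p" if "t \<in> {0..1}" "\<eta>/2 \<le> \<bar>t - 1/2\<bar>" for t
  proof (cases "\<eta> \<le> \<bar>t - 1/2\<bar>")
    case True
    then show ?thesis using far[OF that(1)] \<eta> by (simp add: blend_at_half_outer)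
  next
    case False
    then have "(?h t - p) \<bullet> (\<i> * \<nu>) \<noteq> 0"
      using that \<eta> blend_at_half_in_segment by (intro transversal) auto
    then show ?thesis by auto
  qed
  have "g t \<in> {y. (y - p) \<bullet> \<nu> \<le> 0}" if "t \<in> {0..1}" for t
    using half that unfolding path_image_def by blast
  moreover have "L t \<in> {y. (y - p) \<bullet> \<nu> \<le> 0}" for t
    by (simp add: L_def p_def inner_complex_def)
  ultimately have "?h t \<in> {y. (y - p) \<bullet> \<nu> \<le> 0}" if "t \<in> {0..1}" for t
    using closed_segment_subset[OF _ _ convex_halfspace_le_at] blend_at_half_in_segment that by blast
  then show "path_image ?h \<subseteq> {y. (y - p) \<bullet> \<nu> \<le> 0}" unfolding path_image_def by blast
qed

text \<open>The curve is replaced near \<open>1/2\<close> by its tangent line. The linear homotopy back to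
  the curve avoids \<open>p - s \<nu>\<close>: away from \<open>1/2\<close> the curve stays far from \<open>p\<close>, and near
  \<open>1/2\<close> the homotopy segments cross the normal line through \<open>p\<close> only at \<open>p\<close>.\<close>

lemma winding_number_negative_at_supporting_tangent:
  fixes g :: "real \<Rightarrow> complex" and \<nu> :: complex and k :: real
  assumes g: "path g" "pathfinish g = pathstart g"
    and \<nu>: "\<nu> \<noteq> 0" and k: "k < 0"
    and deriv: "(g has_vector_derivative k *\<^sub>R (\<i> * \<nu>)) (at (1/2))"
    and touch: "\<And>t. t \<in> {0..1} \<Longrightarrow> g t = g (1/2) \<Longrightarrow> t = 1/2"
    and half: "path_image g \<subseteq> {y. (y - g (1/2)) \<bullet> \<nu> \<le> 0}"
  obtains w where "w \<notin> path_image g" "Re (winding_number g w) < 0"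
proof -
  define p where "p = g (1/2)"
  define L where "L = (\<lambda>x. g (1/2) + ((x - 1/2) * k) *\<^sub>R (\<i> * \<nu>))"
  obtain \<eta> r where \<eta>: "0 < \<eta>" "\<eta> \<le> 1/4" and "r > 0"
    and transversal: "\<And>x y. 0 < \<bar>x - 1/2\<bar> \<Longrightarrow> \<bar>x - 1/2\<bar> \<le> \<eta> \<Longrightarrow>
       y \<in> closed_segment (g x) (L x) \<Longrightarrow> (y - p) \<bullet> (\<i> * \<nu>) \<noteq> 0"
    and far: "\<And>x. x \<in> {0..1} \<Longrightarrow> \<eta> \<le> \<bar>x - 1/2\<bar> \<Longrightarrow> r \<le> dist p (g x)"
    using tangent_window[OF g(1) \<nu> k deriv touch] unfolding L_def p_def by blast
  have far': "g x \<noteq> p" if "x \<in> {0..1}" "\<eta> \<le> \<bar>x - 1/2\<bar>" for x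
    using far[OF that] \<open>r > 0\<close> by auto
  define h where "h = blend_at_half \<eta> g L"
  have "\<forall>\<^sub>F s in at_right 0. p - of_real s * \<nu> \<notin> path_image h \<and>
      Re (winding_number h (p - of_real s * \<nu>)) < 0"
    unfolding h_def L_def p_def
    by (rule winding_number_negative_at_blend[OF g \<nu> k \<eta>])
       (use transversal far' half in \<open>auto simp: L_def p_def\<close>)
  moreover have "\<forall>\<^sub>F s in at_right (0::real). s \<in> {0<..<r / norm \<nu>}"
    using \<open>r > 0\<close> \<nu> by (intro eventually_at_right_real) simp
  ultimately have "\<forall>\<^sub>F s in at_right 0. (p - of_real s * \<nu> \<notin> path_image h \<and>
      Re (winding_number h (p - of_real s * \<nu>)) < 0) \<and> s \<in> {0<..<r / norm \<nu>}"
    by (rule eventually_conj)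
  then obtain s where s: "0 < s" "s < r / norm \<nu>" and
    ws: "Re (winding_number h (p - of_real s * \<nu>)) < 0"
    using eventually_happens'[OF trivial_limit_at_right_real] by auto
  define w where "w = p - of_real s * \<nu>"
  have "dist p w < r" using s \<nu> by (simp add: w_def dist_norm norm_mult field_simps)
  have seg: "w \<notin> closed_segment (g x) (h x)" if "x \<in> {0..1}" for x
  proof
    assume w: "w \<in> closed_segment (g x) (h x)"
    consider "\<eta> \<le> \<bar>x - 1/2\<bar>" | "x = 1/2" | "0 < \<bar>x - 1/2\<bar>" "\<bar>x - 1/2\<bar> \<le> \<eta>" by linarith
    then show False
    proof cases
      case 1
      then have "w = g x" using w \<eta> by (simp add: h_def blend_at_half_outer)
      then show False using far[OF that 1] \<open>dist p w < r\<close> by simp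
    next
      case 2
      then have "g x = p" "L x = p" unfolding 2 by (simp_all add: p_def L_def)
      then have "w = p" using w blend_at_half_in_segment[of \<eta> g L x] by (simp add: h_def)
      then show False using s \<nu> by (simp add: w_def)
    next
      case 3
      have "closed_segment (g x) (h x) \<subseteq> closed_segment (g x) (L x)"
        unfolding h_def
        by (rule closed_segment_subset[OF ends_in_segment(1) blend_at_half_in_segment convex_closed_segment])
      then have "(w - p) \<bullet> (\<i> * \<nu>) \<noteq> 0" using 3 w by (intro transversal) auto
      then show False by (simp add: w_def inner_complex_def algebra_simps)
    qed
  qed
  have "continuous_on {0..1} L" unfolding L_def by (intro continuous_intros)
  moreover have "\<eta> \<le> 1/2" using \<eta> by simp
  ultimately have "path h" "pathfinish h = pathstart h"
    using path_blend_at_half[OF g \<eta>(1)] by (auto simp: h_def)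
  then have "winding_number h w = winding_number g w"
    using winding_number_loops_linear_eq[OF g(1) _ g(2) _ seg] by blast
  moreover have "w \<notin> path_image g" using seg by (force simp: path_image_def)
  ultimately show ?thesis using that ws by (simp add: w_def)
qed

lemma simple_closed_path_winding_number_0_or_1:
  assumes \<gamma>: "simple_path \<gamma>" "pathfinish \<gamma> = pathstart \<gamma>"
    and d: "d \<notin> path_image \<gamma>" "winding_number \<gamma> d = 1"
    and w: "w \<notin> path_image \<gamma>"
  shows "winding_number \<gamma> w \<in> {0, 1}"
proof -
  have outside: "winding_number \<gamma> z = 0" if "z \<notin> path_image \<gamma>" "z \<notin> inside (path_image \<gamma>)" for z
    using that winding_number_zero_in_outside[OF simple_path_imp_path[OF \<gamma>(1)] \<gamma>(2)] inside_Un_outside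
    by blast
  have "d \<in> inside (path_image \<gamma>)" using outside[of d] d by auto
  then have "winding_number \<gamma> z = 1" if "z \<in> inside (path_image \<gamma>)" for z
    using simple_closed_path_winding_number_inside[OF \<gamma>(1)] d(2) that by (metis one_neq_neg_one)
  then show ?thesis using outside[OF w] by (cases "w \<in> inside (path_image \<gamma>)") auto
qed

lemma simple_path_circle_image:
  fixes \<Phi> :: "complex \<Rightarrow> 'a::t2_space"
  assumes cont: "continuous_on UNIV (\<lambda>t. \<Phi> (cis t))" and inj: "inj_on \<Phi> (sphere 0 1)"
  shows "simple_path (\<lambda>x. \<Phi> (cis (2 * pi * x)))"
  unfolding simple_path_def loop_free_def
proof (intro conjI ballI impI)
  show "path (\<lambda>x. \<Phi> (cis (2 * pi * x)))"
    unfolding path_def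
    by (rule continuous_on_compose2[OF cont continuous_on_mult_const]) auto
  fix x y :: real assume "x \<in> {0..1}" "y \<in> {0..1}" "\<Phi> (cis (2 * pi * x)) = \<Phi> (cis (2 * pi * y))"
  then show "x = y \<or> x = 0 \<and> y = 1 \<or> x = 1 \<and> y = 0"
    using cis_eq_cis_unit_interval[of 0 x y] inj_onD[OF inj] by simp
qed

lemma winding_number_recentred_loop:
  fixes \<sigma> :: "real \<Rightarrow> complex"
  assumes cont: "continuous_on UNIV \<sigma>" and per: "\<And>t. \<sigma> (t + 2 * pi) = \<sigma> t"
    and t0: "-pi \<le> t0" "t0 \<le> pi"
    and w: "w \<notin> path_image (\<lambda>x. \<sigma> (t0 + 2 * pi * (x - 1/2)))"
  shows "w \<notin> path_image (\<lambda>x. \<sigma> (2 * pi * x))"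
    and "winding_number (\<lambda>x. \<sigma> (2 * pi * x)) w = winding_number (\<lambda>x. \<sigma> (t0 + 2 * pi * (x - 1/2))) w"
proof -
  define \<gamma> g where "\<gamma> = (\<lambda>x. \<sigma> (2 * pi * x))" and "g = (\<lambda>x. \<sigma> (t0 + 2 * pi * (x - 1/2)))"
  have "path \<gamma>"
    unfolding path_def \<gamma>_def by (rule continuous_on_compose2[OF cont continuous_on_mult_const]) auto
  moreover have loop: "pathfinish \<gamma> = pathstart \<gamma>"
    using per[of 0] by (simp add: \<gamma>_def pathfinish_def pathstart_def)
  moreover define a where "a = (t0 + pi) / (2 * pi)"
  moreover have a: "a \<in> {0..1}" using t0 by (auto simp: a_def field_simps)
  moreover have shift: "shiftpath a \<gamma> x = g x" if "x \<in> {0..1}" for x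
  proof -
    have "2 * pi * (a + x) = (t0 + 2 * pi * (x - 1/2)) + 2 * pi"
         "2 * pi * (a + x - 1) = t0 + 2 * pi * (x - 1/2)"
      by (simp_all add: a_def field_simps)
    then show ?thesis by (simp add: shiftpath_def \<gamma>_def g_def per)
  qed
  moreover have "path_image \<gamma> = path_image g"
    using path_image_shiftpath[OF a loop] shift by (auto simp: path_image_def)
  ultimately show "w \<notin> path_image \<gamma>" "winding_number \<gamma> w = winding_number g w"
    using w winding_number_shiftpath[of \<gamma> w a] winding_number_cong[of "shiftpath a \<gamma>" g w]
    by (auto simp: g_def)
qed

lemma supporting_tangent_orientation:
  fixes \<Phi> :: "complex \<Rightarrow> complex" and D :: "complex set" and \<nu> :: complex
  assumes cont: "continuous_on UNIV (\<lambda>t. \<Phi> (cis t))"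
    and deriv: "((\<lambda>t. \<Phi> (cis t)) has_vector_derivative k *\<^sub>R (\<i> * \<nu>)) (at t0)"
    and t0: "-pi \<le> t0" "t0 \<le> pi"
    and inj: "inj_on \<Phi> (sphere 0 1)"
    and D: "open D" "frontier D = \<Phi> ` sphere 0 1"
    and orient: "\<And>w. w \<in> D \<Longrightarrow> winding_number (\<lambda>t. \<Phi> (cis (2 * pi * t))) w = 1"
    and \<nu>: "\<nu> \<noteq> 0"
    and supp: "\<And>z. z \<in> sphere 0 1 \<Longrightarrow> (\<Phi> z - \<Phi> (cis t0)) \<bullet> \<nu> \<le> 0"
  shows "k \<ge> 0"
proof (rule ccontr)
  assume "\<not> k \<ge> 0"
  define \<gamma> where "\<gamma> = (\<lambda>x. \<Phi> (cis (2 * pi * x)))"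
  define g where "g = (\<lambda>x. \<Phi> (cis (t0 + 2 * pi * (x - 1/2))))"
  have cis_shift: "cis (u + 2 * pi) = cis u" for u
    using cis_eq_cis_iff[of "u + 2 * pi" u] by (metis mult.right_neutral of_int_1)
  have "continuous_on {0..1} (\<lambda>x. t0 + 2 * pi * (x - 1/2))" by (intro continuous_intros)
  then have path_g: "path g"
    unfolding path_def g_def by (rule continuous_on_compose2[OF cont]) auto
  have loop_g: "pathfinish g = pathstart g"
    using cis_shift[of "t0 - pi"] by (simp add: pathfinish_def pathstart_def g_def algebra_simps)
  have "((\<lambda>x. t0 + 2 * pi * (x - 1/2)) has_vector_derivative 2 * pi) (at (1/2))"
    by (auto intro!: derivative_eq_intros simp: has_real_derivative_iff_has_vector_derivative[symmetric])
  moreover have "((\<lambda>t. \<Phi> (cis t)) has_vector_derivative k *\<^sub>R (\<i> * \<nu>)) (at (t0 + 2 * pi * (1/2 - 1/2)))"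
    using deriv by simp
  ultimately have gd: "(g has_vector_derivative (2 * pi * k) *\<^sub>R (\<i> * \<nu>)) (at (1/2))"
    unfolding g_def using vector_diff_chain_at by (fastforce simp: o_def)
  obtain w where w: "w \<notin> path_image g" "Re (winding_number g w) < 0"
  proof (rule winding_number_negative_at_supporting_tangent[OF path_g loop_g \<nu> _ gd])
    show "2 * pi * k < 0" using \<open>\<not> k \<ge> 0\<close> by (simp add: mult_pos_neg)
    show "t = 1/2" if "t \<in> {0..1}" "g t = g (1/2)" for t
    proof -
      have "cis (t0 - pi + 2 * pi * t) = cis (t0 - pi + 2 * pi * (1/2))"
        using inj_onD[OF inj] that(2) by (simp add: g_def algebra_simps)
      then show ?thesis using cis_eq_cis_unit_interval that(1) by fastforce
    qed
    show "path_image g \<subseteq> {y. (y - g (1/2)) \<bullet> \<nu> \<le> 0}"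
      using supp by (auto simp: path_image_def g_def)
  qed
  then have w\<gamma>: "w \<notin> path_image \<gamma>" and "Re (winding_number \<gamma> w) < 0"
    using winding_number_recentred_loop[OF cont _ t0, of w] cis_shift by (simp_all add: \<gamma>_def g_def)
  moreover have \<gamma>: "simple_path \<gamma>" "pathfinish \<gamma> = pathstart \<gamma>"
    using simple_path_circle_image[OF cont inj] by (simp_all add: \<gamma>_def pathfinish_def pathstart_def)
  moreover obtain d where "d \<in> D" using D(2) frontier_empty by fastforce
  then have "d \<notin> path_image \<gamma>" "winding_number \<gamma> d = 1"
    using D orient interior_open[OF D(1)] by (auto simp: path_image_def \<gamma>_def frontier_def)
  ultimately show False
    using simple_closed_path_winding_number_0_or_1[OF \<gamma> _ _ w\<gamma>] by fastforce
qed

section \<open>The Jacobian on the convex part of the boundary\<close>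

lemma harmonic_on_lincomb:
  assumes "harmonic_on f S" "harmonic_on g S"
  shows "harmonic_on (\<lambda>z. a * f z + b * g z + c) S"
proof -
  obtain f' f'' where f: "\<forall>z\<in>S. (f has_derivative f' z) (at z)"
     "\<forall>z\<in>S. \<forall>v. ((\<lambda>w. f' w v) has_derivative f'' z v) (at z)"
     "\<forall>v w. continuous_on S (\<lambda>z. f'' z v w)" "\<forall>z\<in>S. f'' z 1 1 + f'' z \<i> \<i> = 0"
    using assms(1) unfolding harmonic_on_def by blast
  obtain g' g'' where g: "\<forall>z\<in>S. (g has_derivative g' z) (at z)"
     "\<forall>z\<in>S. \<forall>v. ((\<lambda>w. g' w v) has_derivative g'' z v) (at z)"
     "\<forall>v w. continuous_on S (\<lambda>z. g'' z v w)" "\<forall>z\<in>S. g'' z 1 1 + g'' z \<i> \<i> = 0"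
    using assms(2) unfolding harmonic_on_def by blast
  show ?thesis
    unfolding harmonic_on_def
  proof (intro exI[of _ "\<lambda>z v. a * f' z v + b * g' z v"]
      exI[of _ "\<lambda>z v w. a * f'' z v w + b * g'' z v w"] conjI ballI allI)
    fix z v assume "z \<in> S"
    then show "((\<lambda>z. a * f z + b * g z + c) has_derivative (\<lambda>v. a * f' z v + b * g' z v)) (at z)"
      and "((\<lambda>w. a * f' w v + b * g' w v) has_derivative (\<lambda>w. a * f'' z v w + b * g'' z v w)) (at z)"
      using f(1,2) g(1,2) by (auto intro!: derivative_eq_intros)
    have "a * f'' z 1 1 + b * g'' z 1 1 + (a * f'' z \<i> \<i> + b * g'' z \<i> \<i>)
        = a * (f'' z 1 1 + f'' z \<i> \<i>) + b * (g'' z 1 1 + g'' z \<i> \<i>)"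
      by (simp add: algebra_simps)
    then show "a * f'' z 1 1 + b * g'' z 1 1 + (a * f'' z \<i> \<i> + b * g'' z \<i> \<i>) = 0"
      using f(4) g(4) \<open>z \<in> S\<close> by simp
  next
    fix v w
    show "continuous_on S (\<lambda>z. a * f'' z v w + b * g'' z v w)"
      using f(3) g(3) by (simp add: continuous_on_add continuous_on_mult_left)
  qed
qed

lemma harmonic_map_normal_derivative_pos:
  fixes U :: "complex \<Rightarrow> complex"
  assumes R: "R > 0"
    and harm: "harmonic_on (\<lambda>z. Re (U z)) (ball c R)" "harmonic_on (\<lambda>z. Im (U z)) (ball c R)"
    and cont: "continuous_on (cball c R) U"
    and z0: "z0 \<in> sphere c R" and DU: "(U has_derivative DU) (at z0 within cball c R)"
    and le: "\<And>z. z \<in> sphere c R \<Longrightarrow> (U z - U z0) \<bullet> \<nu> \<le> 0"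
    and \<zeta>: "\<zeta> \<in> sphere c R" "(U \<zeta> - U z0) \<bullet> \<nu> < 0"
  shows "DU (z0 - c) \<bullet> \<nu> > 0"
proof -
  define h where "h z = (U z - U z0) \<bullet> \<nu>" for z
  have "h = (\<lambda>z. Re \<nu> * Re (U z) + Im \<nu> * Im (U z) + - (U z0 \<bullet> \<nu>))"
    by (auto simp: h_def inner_complex_def algebra_simps fun_eq_iff)
  then have lap: "laplacian_nonneg_on h (ball c R)"
    using harmonic_on_imp_laplacian_nonneg_on harmonic_on_lincomb[OF harm] by presburger
  have hc: "continuous_on (cball c R) h"
    unfolding h_def by (intro continuous_intros cont)
  have hd: "(h has_derivative (\<lambda>v. DU v \<bullet> \<nu>)) (at z0 within cball c R)"
    unfolding h_def by (auto intro!: derivative_eq_intros DU)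
  have "DU (c - z0) \<bullet> \<nu> < 0"
  proof (rule hopf_lemma_sphere[OF R hc lap _ \<zeta>(1) _ z0 _ hd])
    show "h z \<le> 0" if "z \<in> sphere c R" for z using le that by (simp add: h_def)
    show "h \<zeta> < 0" "h z0 = 0" using \<zeta>(2) by (simp_all add: h_def)
  qed
  moreover have "DU (c - z0) = - DU (z0 - c)"
    using linear_neg[OF has_derivative_linear[OF DU]] by (metis minus_diff_eq)
  ultimately show ?thesis by simp
qed

lemma convex_part_supporting_normal:
  fixes D :: "complex set"
  assumes "open D" "D \<noteq> {}" "p \<in> convex_part D"
  obtains \<nu> where "\<nu> \<noteq> 0" "\<And>y. y \<in> closure D \<Longrightarrow> (y - p) \<bullet> \<nu> \<le> 0"
proof -
  define S where "S = convex hull D"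
  have "D \<subseteq> interior S"
    by (rule interior_maximal) (auto simp: S_def hull_subset assms(1))
  then have "rel_interior S = interior S"
    using assms(2) by (intro rel_interior_nonempty_interior) auto
  then have "p \<in> closure S" "p \<notin> rel_interior S"
    using assms(3) by (auto simp: convex_part_def S_def frontier_def)
  then obtain a where "a \<noteq> 0" and a: "\<And>y. y \<in> closure S \<Longrightarrow> a \<bullet> p \<le> a \<bullet> y"
    using supporting_hyperplane_relative_frontier[OF convex_convex_hull] by (metis S_def)
  show ?thesis
  proof (rule that[of "- a"])
    show "- a \<noteq> 0" using \<open>a \<noteq> 0\<close> by simp
    fix y assume "y \<in> closure D"
    then have "y \<in> closure S" using closure_mono[OF hull_subset] by (auto simp: S_def)
    moreover have "(y - p) \<bullet> - a = - (a \<bullet> y - a \<bullet> p)"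
      by (metis inner_commute inner_diff_left inner_minus_right)
    ultimately show "(y - p) \<bullet> - a \<le> 0" using a by simp
  qed
qed

lemma frontier_not_subset_hyperplane:
  fixes D :: "'a::euclidean_space set"
  assumes D: "open D" "D \<noteq> {}" "bounded D" and \<nu>: "\<nu> \<noteq> 0"
  shows "\<not> frontier D \<subseteq> {x. (x - p) \<bullet> \<nu> = 0}"
proof
  assume fr: "frontier D \<subseteq> {x. (x - p) \<bullet> \<nu> = 0}"
  have eq: "(x - p) \<bullet> \<nu> = \<nu> \<bullet> x - \<nu> \<bullet> p" for x
    by (metis inner_commute inner_diff_left)
  have "\<not> D \<subseteq> {x. \<nu> \<bullet> x = \<nu> \<bullet> p}"
    using interior_mono[of D "{x. \<nu> \<bullet> x = \<nu> \<bullet> p}"] interior_open[OF D(1)] D(2) \<nu> by auto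
  then obtain d where d: "d \<in> D" "(d - p) \<bullet> \<nu> \<noteq> 0" by (auto simp: eq)
  define \<sigma> where "\<sigma> = sgn ((d - p) \<bullet> \<nu>)"
  have \<sigma>: "\<sigma> * ((d - p) \<bullet> \<nu>) > 0" "\<bar>\<sigma>\<bar> = 1" using d(2) by (auto simp: \<sigma>_def sgn_real_def)
  obtain M where M: "\<And>x. x \<in> D \<Longrightarrow> norm x \<le> M" using D(3) bounded_iff by blast
  define T where "T = (M + norm d + 1) / norm \<nu>"
  have Mpos: "M + norm d + 1 > 0" using M[OF d(1)] norm_ge_zero[of d] by linarith
  then have "T \<ge> 0" by (simp add: T_def)
  define e where "e = d + (T * \<sigma>) *\<^sub>R \<nu>"
  have "norm ((T * \<sigma>) *\<^sub>R \<nu>) = M + norm d + 1"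
    using Mpos \<nu> \<sigma>(2) \<open>T \<ge> 0\<close> by (simp add: T_def abs_mult)
  then have "norm e > M" using norm_triangle_ineq4[of e d] by (simp add: e_def)
  then have "e \<notin> D" using M by force
  then obtain q where q: "q \<in> closed_segment d e" "q \<in> frontier D"
    using connected_Int_frontier[of "closed_segment d e" D] d(1) by auto
  then obtain u where u: "0 \<le> u" "q = d + (u * T * \<sigma>) *\<^sub>R \<nu>"
    by (auto simp: closed_segment_def e_def algebra_simps)
  have "\<sigma> * ((q - p) \<bullet> \<nu>) = \<sigma> * ((d - p) \<bullet> \<nu>) + u * T * (\<sigma> * \<sigma>) * (\<nu> \<bullet> \<nu>)"
    by (simp add: u(2) algebra_simps)
  moreover have "u * T * (\<sigma> * \<sigma>) * (\<nu> \<bullet> \<nu>) \<ge> 0" using u(1) \<open>T \<ge> 0\<close> by simp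
  ultimately have "\<sigma> * ((q - p) \<bullet> \<nu>) > 0" using \<sigma>(1) by linarith
  moreover have "(q - p) \<bullet> \<nu> = 0" using fr q(2) by blast
  ultimately show False by simp
qed

lemma has_vector_derivative_orthogonal_at_max:
  fixes f :: "real \<Rightarrow> 'a::real_inner"
  assumes "(f has_vector_derivative b) (at t)" "\<And>s. (f s - f t) \<bullet> \<nu> \<le> 0"
  shows "b \<bullet> \<nu> = 0"
proof -
  have "((\<lambda>s. (f s - f t) \<bullet> \<nu>) has_derivative (\<lambda>h. (h *\<^sub>R b) \<bullet> \<nu>)) (at t)"
    using assms(1) unfolding has_vector_derivative_def by (auto intro!: derivative_eq_intros)
  moreover have "(\<lambda>h. (h *\<^sub>R b) \<bullet> \<nu>) = (*) (b \<bullet> \<nu>)" by (auto simp: fun_eq_iff)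
  ultimately have "((\<lambda>s. (f s - f t) \<bullet> \<nu>) has_real_derivative b \<bullet> \<nu>) (at t)"
    by (simp add: has_field_derivative_def)
  then show ?thesis
    by (rule DERIV_local_max[OF _ zero_less_one]) (use assms(2) in auto)
qed

lemma orthogonal_complex_eq_scaleR:
  fixes b \<nu> :: complex
  assumes "b \<bullet> \<nu> = 0" "\<nu> \<noteq> 0"
  obtains k where "b = k *\<^sub>R (\<i> * \<nu>)"
proof (rule that[of "Im (b * cnj \<nu>) / (norm \<nu>)\<^sup>2"])
  have "b * cnj \<nu> = \<i> * of_real (Im (b * cnj \<nu>))"
    using assms(1) by (simp add: complex_eq_iff inner_complex_def)
  moreover have "b * of_real ((norm \<nu>)\<^sup>2) = (b * cnj \<nu>) * \<nu>"
    unfolding complex_norm_square by (simp add: algebra_simps)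
  ultimately have "b * of_real ((norm \<nu>)\<^sup>2) = \<i> * of_real (Im (b * cnj \<nu>)) * \<nu>" by simp
  moreover have "of_real ((norm \<nu>)\<^sup>2) \<noteq> (0::complex)" using assms(2) by simp
  ultimately show "b = (Im (b * cnj \<nu>) / (norm \<nu>)\<^sup>2) *\<^sub>R (\<i> * \<nu>)"
    by (simp add: scaleR_conv_of_real field_simps)
qed

lemma jac_det_eq_inner:
  assumes L: "linear L" and z: "norm z = 1" and Lz: "L (\<i> * z) = k *\<^sub>R (\<i> * \<nu>)"
  shows "jac_det L = k * (L z \<bullet> \<nu>)"
proof -
  have xy: "(Re z)\<^sup>2 + (Im z)\<^sup>2 = 1" using z by (simp add: cmod_power2[symmetric])
  have one: "(1::complex) = Re z *\<^sub>R z + (- Im z) *\<^sub>R (\<i> * z)"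
    and ii: "\<i> = Im z *\<^sub>R z + Re z *\<^sub>R (\<i> * z)"
    using xy by (simp_all add: complex_eq_iff power2_eq_square algebra_simps)
  have L1: "L 1 = Re z *\<^sub>R L z + (- Im z) *\<^sub>R L (\<i> * z)"
    by (subst one) (simp only: linear_add[OF L] linear_scale[OF L])
  have Li: "L \<i> = Im z *\<^sub>R L z + Re z *\<^sub>R L (\<i> * z)"
    by (subst ii) (simp only: linear_add[OF L] linear_scale[OF L])
  have "jac_det L = ((Re z)\<^sup>2 + (Im z)\<^sup>2) * (k * (L z \<bullet> \<nu>))"
    unfolding jac_det_def L1 Li Lz by (simp add: inner_complex_def power2_eq_square algebra_simps)
  then show ?thesis using xy by simp
qed

lemma derivative_along_circle:
  fixes U \<Phi> :: "complex \<Rightarrow> complex"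
  assumes DU: "(U has_derivative DU) (at (cis t) within cball 0 1)"
    and U: "\<And>z. z \<in> sphere 0 1 \<Longrightarrow> U z = \<Phi> z"
    and \<Phi>: "((\<lambda>t. \<Phi> (cis t)) has_vector_derivative b) (at t)"
  shows "DU (\<i> * cis t) = b"
proof -
  have "(cis has_derivative (\<lambda>s. s *\<^sub>R (\<i> * cis t))) (at t)"
    using has_derivative_cis[OF has_derivative_ident, of t UNIV] by simp
  moreover have "(U has_derivative DU) (at (cis t) within range cis)"
    by (rule has_derivative_subset[OF DU]) auto
  ultimately have "((\<lambda>t. U (cis t)) has_derivative (\<lambda>s. DU (s *\<^sub>R (\<i> * cis t)))) (at t)"
    by (rule has_derivative_in_compose)
  moreover have "(\<lambda>t. U (cis t)) = (\<lambda>t. \<Phi> (cis t))" using U by auto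
  ultimately have "(\<lambda>s. DU (s *\<^sub>R (\<i> * cis t))) = (\<lambda>s. s *\<^sub>R b)"
    using \<Phi> unfolding has_vector_derivative_def by (auto intro: has_derivative_unique)
  from fun_cong[OF this, of 1] show ?thesis by simp
qed

lemma convex_part_boundary_normal:
  fixes \<Phi> :: "complex \<Rightarrow> complex" and D :: "complex set"
  assumes D: "open D" "bounded D" "frontier D = \<Phi> ` sphere 0 1"
    and z0: "\<Phi> z0 \<in> convex_part D"
  obtains \<nu> \<zeta> where "\<nu> \<noteq> 0" "\<And>z. z \<in> sphere 0 1 \<Longrightarrow> (\<Phi> z - \<Phi> z0) \<bullet> \<nu> \<le> 0"
    "\<zeta> \<in> sphere 0 1" "(\<Phi> \<zeta> - \<Phi> z0) \<bullet> \<nu> < 0"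
proof -
  have "D \<noteq> {}" using D(3) by force
  then obtain \<nu> where \<nu>: "\<nu> \<noteq> 0" and supp: "\<And>y. y \<in> closure D \<Longrightarrow> (y - \<Phi> z0) \<bullet> \<nu> \<le> 0"
    using convex_part_supporting_normal[OF D(1) _ z0] by blast
  have le: "(\<Phi> z - \<Phi> z0) \<bullet> \<nu> \<le> 0" if "z \<in> sphere 0 1" for z
    using supp[of "\<Phi> z"] that D(3) unfolding frontier_def by blast
  moreover obtain \<zeta> where "\<zeta> \<in> sphere 0 1" "(\<Phi> \<zeta> - \<Phi> z0) \<bullet> \<nu> < 0"
    using frontier_not_subset_hyperplane[OF D(1) \<open>D \<noteq> {}\<close> D(2) \<nu>, of "\<Phi> z0"] le D(3)
    by (force simp: subset_iff le_less)
  ultimately show ?thesis using that \<nu> by blast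
qed

lemma supporting_tangent_positive:
  fixes \<Phi> :: "complex \<Rightarrow> complex" and \<Phi>' :: "real \<Rightarrow> complex" and D :: "complex set"
  assumes Phi_C1: "\<And>t. ((\<lambda>t. \<Phi> (cis t)) has_vector_derivative \<Phi>' t) (at t)"
    and "\<Phi>' t0 \<noteq> 0" and t0: "-pi \<le> t0" "t0 \<le> pi"
    and inj: "inj_on \<Phi> (sphere 0 1)"
    and D: "open D" "frontier D = \<Phi> ` sphere 0 1"
    and orient: "\<And>w. w \<in> D \<Longrightarrow> winding_number (\<lambda>t. \<Phi> (cis (2 * pi * t))) w = 1"
    and \<nu>: "\<nu> \<noteq> 0"
    and supp: "\<And>z. z \<in> sphere 0 1 \<Longrightarrow> (\<Phi> z - \<Phi> (cis t0)) \<bullet> \<nu> \<le> 0"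
  obtains k where "k > 0" "\<Phi>' t0 = k *\<^sub>R (\<i> * \<nu>)"
proof -
  have "\<Phi>' t0 \<bullet> \<nu> = 0"
    by (rule has_vector_derivative_orthogonal_at_max[OF Phi_C1]) (simp add: supp)
  then obtain k where k: "\<Phi>' t0 = k *\<^sub>R (\<i> * \<nu>)"
    using orthogonal_complex_eq_scaleR[OF _ \<nu>] by blast
  have "continuous_on UNIV (\<lambda>t. \<Phi> (cis t))"
    by (rule continuous_at_imp_continuous_on) (use Phi_C1 has_vector_derivative_continuous in blast)
  then have "k \<ge> 0"
    using supporting_tangent_orientation[OF _ Phi_C1[of t0, unfolded k] t0 inj D orient \<nu> supp] by blast
  moreover have "k \<noteq> 0" using \<open>\<Phi>' t0 \<noteq> 0\<close> k by auto
  ultimately show ?thesis using that[OF _ k] by simp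
qed

theorem lemma5p3:
  fixes \<Phi> U :: "complex \<Rightarrow> complex"
    and \<Phi>' :: "real \<Rightarrow> complex"
    and DU :: "complex \<Rightarrow> complex \<Rightarrow> complex"
    and D :: "complex set"
  assumes Phi_C1: "\<And>t. ((\<lambda>t. \<Phi> (cis t)) has_vector_derivative \<Phi>' t) (at t)"
    and Phi'_cont: "continuous_on UNIV \<Phi>'"
    and Phi'_nz: "\<And>t. \<Phi>' t \<noteq> 0"
    and Phi_inj: "inj_on \<Phi> (sphere 0 1)"
    and D_open: "open D" and D_conn: "connected D" and D_bdd: "bounded D"
    and D_bdry: "frontier D = \<Phi> ` sphere 0 1"
    and orient: "\<And>w. w \<in> D \<Longrightarrow> winding_number (\<lambda>t. \<Phi> (cis (2 * pi * t))) w = 1"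
    and U_harm_re: "harmonic_on (\<lambda>z. Re (U z)) (ball 0 1)"
    and U_harm_im: "harmonic_on (\<lambda>z. Im (U z)) (ball 0 1)"
    and U_cont: "continuous_on (cball 0 1) U"
    and U_bdry: "\<And>z. z \<in> sphere 0 1 \<Longrightarrow> U z = \<Phi> z"
    and U_C1: "\<And>z. z \<in> cball 0 1 \<Longrightarrow> (U has_derivative DU z) (at z within cball 0 1)"
    and DU_cont: "\<And>v. continuous_on (cball 0 1) (\<lambda>z. DU z v)"
  shows "\<forall>z \<in> sphere 0 1. \<Phi> z \<in> convex_part D \<longrightarrow> jac_det (DU z) > 0"
proof (intro ballI impI)
  fix z0 assume z0: "z0 \<in> sphere 0 1" and "\<Phi> z0 \<in> convex_part D"
  then obtain \<nu> \<zeta> where \<nu>: "\<nu> \<noteq> 0" and on_circle: "\<And>z. z \<in> sphere 0 1 \<Longrightarrow> (\<Phi> z - \<Phi> z0) \<bullet> \<nu> \<le> 0"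
    and \<zeta>: "\<zeta> \<in> sphere 0 1" "(\<Phi> \<zeta> - \<Phi> z0) \<bullet> \<nu> < 0"
    using convex_part_boundary_normal[OF D_open D_bdd D_bdry] by metis
  have radial: "DU z0 z0 \<bullet> \<nu> > 0"
    using harmonic_map_normal_derivative_pos[OF _ U_harm_re U_harm_im U_cont z0 U_C1, of \<nu> \<zeta>]
      on_circle \<zeta> z0 U_bdry by simp
  define t0 where "t0 = Arg z0"
  have "z0 \<noteq> 0" using z0 by auto
  then have z0_eq: "z0 = cis t0" using z0 cis_Arg[of z0] by (simp add: t0_def sgn_div_norm)
  have "- pi \<le> t0" "t0 \<le> pi" using Arg_bounded[of z0] by (simp_all add: t0_def)
  then obtain k where "k > 0" "\<Phi>' t0 = k *\<^sub>R (\<i> * \<nu>)"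
    using supporting_tangent_positive[OF Phi_C1 Phi'_nz _ _ Phi_inj D_open D_bdry orient \<nu>]
      on_circle z0_eq by metis
  moreover have "DU z0 (\<i> * z0) = \<Phi>' t0"
    using derivative_along_circle[OF _ U_bdry Phi_C1] U_C1 z0 by (simp add: z0_eq)
  ultimately show "jac_det (DU z0) > 0"
    using jac_det_eq_inner[OF has_derivative_linear[OF U_C1]] radial z0 by simp
qed

end
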